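(* Let $p$ be prime with $X_0(p)$ of genus $g\ge1$. For $q,q'\in D(0,0.01)$ one has $|\mu_\infty(q')-\mu_\infty(q)|_\infty\le 7|q'-q|$, and for $q,q'\in D(0,1-\frac{1}{2p})$ one has $|\mu_0(q')-\mu_0(q)|_\infty\le 96p^4|q'-q|$. In particular the Jacobi integration map is Lipschitz on $D_\infty=D(0,0.005)$ with constant at most $7$ and on $D_0=D(0,1-1/p)$ with constant at most $96p^4$.
   Context: For $\tau$ in the upper half plane put $q_\infty=\exp(2i\pi\tau)$, $q_0=\exp(-2i\pi/(p\tau))$. $\mathcal D_1$ is the set of differentials $\omega=f(q)\,dq/q$ on $X_0(p)$, with $f=\sum_{k\ge1}a_kq^k$ running over the weight-2 cusp forms on $\Gamma_0(p)$ that are Hecke eigenforms with $a_1=1$; each such $\omega$ equals $\frac{f(q_\infty)}{q_\infty}dq_\infty$ and also $\pm\frac{f(q_0)}{q_0}dq_0$ (Atkin–Lehner eigenvalue $\pm1$). The Jacobi maps on the discs are $\mu_\infty(q)=(\int^{q}\omega)_{\omega\in\mathcal D_1}$ (integration in the coordinate $q_\infty$) and $\mu_0(q)=(\int^{q}\omega)_{\omega\in\mathcal D_1}$ (integration in the coordinate $q_0$), defined up to a common additive constant (choice of a base point); so $\mu_\infty(q')-\mu_\infty(q)=(\int_q^{q'}\frac{f(t)}{t}dt)_\omega$, and similarly for $\mu_0$ with the signs $\pm$. $\mathbb C^{\mathcal D_1}$ carries the sup norm $|\cdot|_\infty$ in its canonical basis. *)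

theory Defs
  imports "HOL-Complex_Analysis.Complex_Analysis" "HOL-Computational_Algebra.Primes"
begin

definition uhp :: "complex set" where
  "uhp = {z. Im z > 0}"

definition slash2 :: "(complex \<Rightarrow> complex) \<Rightarrow> int \<Rightarrow> int \<Rightarrow> int \<Rightarrow> int \<Rightarrow> complex \<Rightarrow> complex" where
  "slash2 f a b c d \<tau> =
     f ((of_int a * \<tau> + of_int b) / (of_int c * \<tau> + of_int d)) / (of_int c * \<tau> + of_int d) ^ 2"

text \<open>Weight-2 cusp forms on Gamma_0(N): holomorphic on the upper half plane, invariant under
  the weight-2 slash action of Gamma_0(N), and vanishing at every cusp: for every
  gamma in SL_2(Z), f|gamma is a holomorphic function of exp(2 pi i tau / N) (every cusp width
  of Gamma_0(N) divides N) vanishing at 0.\<close>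
definition weight2_cusp_form :: "nat \<Rightarrow> (complex \<Rightarrow> complex) \<Rightarrow> bool" where
  "weight2_cusp_form N f \<longleftrightarrow>
     f holomorphic_on uhp \<and>
     (\<forall>a b c d. a * d - b * c = 1 \<and> int N dvd c \<longrightarrow>
        (\<forall>\<tau>\<in>uhp. slash2 f a b c d \<tau> = f \<tau>)) \<and>
     (\<forall>a b c d. a * d - b * c = 1 \<longrightarrow>
        (\<exists>h. h holomorphic_on ball 0 1 \<and> h 0 = 0 \<and>
             (\<forall>\<tau>\<in>uhp. slash2 f a b c d \<tau> = h (exp (2 * pi * \<i> * \<tau> / of_nat N)))))"

definition qexp_inf :: "(complex \<Rightarrow> complex) \<Rightarrow> complex \<Rightarrow> complex" where
  "qexp_inf f = (SOME F. F holomorphic_on ball 0 1 \<and>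
                   (\<forall>\<tau>\<in>uhp. f \<tau> = F (exp (2 * pi * \<i> * \<tau>))))"

definition fcoeff :: "(complex \<Rightarrow> complex) \<Rightarrow> nat \<Rightarrow> complex" where
  "fcoeff f n = (deriv ^^ n) (qexp_inf f) 0 / of_nat (fact n)"

text \<open>Hecke operators T_l (l prime, l not dividing p) and U_p in weight 2 on q-expansion coefficients.\<close>
definition hecke_coeff :: "nat \<Rightarrow> nat \<Rightarrow> (nat \<Rightarrow> complex) \<Rightarrow> nat \<Rightarrow> complex" where
  "hecke_coeff N l a n =
     (if l dvd N then a (l * n)
      else a (l * n) + (if l dvd n then of_nat l * a (n div l) else 0))"

definition hecke_eigenform :: "nat \<Rightarrow> (complex \<Rightarrow> complex) \<Rightarrow> bool" where
  "hecke_eigenform N f \<longleftrightarrow>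
     (\<forall>l::nat. prime l \<longrightarrow> (\<exists>ev. \<forall>n. hecke_coeff N l (fcoeff f) n = ev * fcoeff f n))"

text \<open>The set D_1 (identified with the set of normalized eigenforms f).\<close>
definition D1 :: "nat \<Rightarrow> (complex \<Rightarrow> complex) set" where
  "D1 p = {f. weight2_cusp_form p f \<and> hecke_eigenform p f \<and> fcoeff f 1 = 1}"

text \<open>Expansion of omega = 2 pi i f(tau) d tau in the coordinate q_0 = exp(-2 pi i/(p tau)):
  omega = G(q_0) dq_0/q_0 with G(exp(2 pi i sigma)) = f(-1/(p sigma)) / (p sigma^2).\<close>
definition qexp_zero :: "nat \<Rightarrow> (complex \<Rightarrow> complex) \<Rightarrow> complex \<Rightarrow> complex" where
  "qexp_zero p f = (SOME G. G holomorphic_on ball 0 1 \<and>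
                   (\<forall>\<sigma>\<in>uhp. G (exp (2 * pi * \<i> * \<sigma>)) =
                        f (- 1 / (of_nat p * \<sigma>)) / (of_nat p * \<sigma> ^ 2)))"

text \<open>Components of mu_infinity(q') - mu_infinity(q) and mu_0(q') - mu_0(q).\<close>
definition mu_inf_diff :: "(complex \<Rightarrow> complex) \<Rightarrow> complex \<Rightarrow> complex \<Rightarrow> complex" where
  "mu_inf_diff f q q' = contour_integral (linepath q q') (\<lambda>t. qexp_inf f t / t)"

definition mu_zero_diff :: "nat \<Rightarrow> (complex \<Rightarrow> complex) \<Rightarrow> complex \<Rightarrow> complex \<Rightarrow> complex" where
  "mu_zero_diff p f q q' = contour_integral (linepath q q') (\<lambda>t. qexp_zero p f t / t)"

end

theory Submission
  imports Defs "HOL-Number_Theory.Pocklington"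
begin

text \<open>Write F(q) = sum a_n q^n and G(q) = sum b_n q^n for the expansions of f at the cusps
  infinity and 0. The components of the Jacobi maps are primitives of F(q)/q and G(q)/q, so the
  Lipschitz constants are bounds for these quotients on the discs, and they follow from
  |a_n| <= n^2 and |b_n| <= p n^2 via sum n^2 x^(n-1) <= 2/(1-x)^3.

  The bound |a_n| <= n^2 is an elementary substitute for Deligne's: Hecke's estimate
  a_n = O(n), which comes from the boundedness of Im(tau) |f(tau)|, forces the eigenvalues of
  T_l and U_p to satisfy |lambda_l| <= l + 1 and |lambda_p| <= p, and the Hecke recursion then
  gives |a_n| <= n^2 by induction. At the cusp 0 one has b_m = - a_(p m) = - lambda_p a_m: the
  trace of the Fricke transform of f to SL_2(Z) is a weight-2 cusp form of level one, hence
  zero, because a primitive of it would be an SL_2(Z)-invariant holomorphic function on the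
  upper half plane that tends to 0 at the cusp.\<close>

section \<open>Moebius transformations and reduction theory\<close>

lemma mem_uhp_iff: "z \<in> uhp \<longleftrightarrow> Im z > 0"
  by (simp add: uhp_def)

definition moebius_int :: "int \<Rightarrow> int \<Rightarrow> int \<Rightarrow> int \<Rightarrow> complex \<Rightarrow> complex" where
  "moebius_int a b c d z = (of_int a * z + of_int b) / (of_int c * z + of_int d)"

lemma int_lincomb_uhp_nonzero:
  assumes "(c::int) \<noteq> 0 \<or> d \<noteq> 0" "Im z > 0"
  shows "of_int c * z + of_int d \<noteq> 0"
proof
  assume h: "of_int c * z + of_int d = 0"
  then have "Im (of_int c * z + of_int d) = 0" by simp
  then have "c = 0" using assms(2) by simp
  with h assms(1) show False by simp
qed

lemma moebius_denom_nonzero: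
  "a * d - b * c = (1::int) \<Longrightarrow> Im z > 0 \<Longrightarrow> of_int c * z + of_int d \<noteq> 0"
  by (rule int_lincomb_uhp_nonzero) auto

lemma moebius_numer_nonzero:
  "a * d - b * c = (1::int) \<Longrightarrow> Im z > 0 \<Longrightarrow> of_int a * z + of_int b \<noteq> 0"
  by (rule int_lincomb_uhp_nonzero) auto

lemma Im_moebius_int:
  assumes "a * d - b * c = (1::int)"
  shows "Im (moebius_int a b c d z) = Im z / (cmod (of_int c * z + of_int d))\<^sup>2"
proof -
  have det: "real_of_int a * real_of_int d - real_of_int b * real_of_int c = 1"
    using assms by (metis of_int_1 of_int_diff of_int_mult)
  have "Im (moebius_int a b c d z) = Im z * (real_of_int a * real_of_int d - real_of_int b * real_of_int c)
      / ((Re (of_int c * z + of_int d))\<^sup>2 + (Im (of_int c * z + of_int d))\<^sup>2)"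
    unfolding moebius_int_def by (simp add: Im_divide power2_eq_square algebra_simps)
  then show ?thesis
    using det by (simp add: cmod_power2)
qed

lemma Im_moebius_int_pos:
  "a * d - b * c = (1::int) \<Longrightarrow> Im z > 0 \<Longrightarrow> Im (moebius_int a b c d z) > 0"
  using Im_moebius_int moebius_denom_nonzero by simp

lemma moebius_int_denom_comp:
  assumes "of_int c2 * z + of_int d2 \<noteq> (0::complex)"
  shows "of_int c1 * moebius_int a2 b2 c2 d2 z + of_int d1 =
    (of_int (c1*a2+d1*c2) * z + of_int (c1*b2+d1*d2)) / (of_int c2 * z + of_int d2)"
  using assms by (simp add: moebius_int_def field_simps)

lemma moebius_int_comp:
  assumes "of_int c2 * z + of_int d2 \<noteq> (0::complex)"
  shows "moebius_int a1 b1 c1 d1 (moebius_int a2 b2 c2 d2 z) =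
     moebius_int (a1*a2+b1*c2) (a1*b2+b1*d2) (c1*a2+d1*c2) (c1*b2+d1*d2) z"
proof -
  have "of_int a1 * moebius_int a2 b2 c2 d2 z + of_int b1 =
    (of_int (a1*a2+b1*c2) * z + of_int (a1*b2+b1*d2)) / (of_int c2 * z + of_int d2)"
    using assms by (simp add: moebius_int_def field_simps)
  then show ?thesis
    using assms unfolding moebius_int_def[of a1 b1 c1 d1] moebius_int_denom_comp[OF assms]
    by (simp add: moebius_int_def)
qed

lemma moebius_int_inverse:
  assumes "a * d - b * c = (1::int)" "Im z > 0"
  shows "moebius_int d (-b) (-c) a (moebius_int a b c d z) = z"
proof -
  have "moebius_int d (-b) (-c) a (moebius_int a b c d z) =
      moebius_int (d*a+(-b)*c) (d*b+(-b)*d) ((-c)*a+a*c) ((-c)*b+a*d) z"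
    by (rule moebius_int_comp[OF moebius_denom_nonzero[OF assms]])
  also have "\<dots> = z" using assms(1) by (simp add: algebra_simps moebius_int_def)
  finally show ?thesis .
qed

lemma slash2_moebius_int:
  "slash2 f a b c d z = f (moebius_int a b c d z) / (of_int c * z + of_int d)\<^sup>2"
  by (simp add: slash2_def moebius_int_def)

lemma slash2_slash2:
  assumes "a2 * d2 - b2 * c2 = (1::int)" "Im z > 0"
  shows "slash2 (slash2 f a1 b1 c1 d1) a2 b2 c2 d2 z =
     slash2 f (a1*a2+b1*c2) (a1*b2+b1*d2) (c1*a2+d1*c2) (c1*b2+d1*d2) z"
proof -
  have nz: "of_int c2 * z + of_int d2 \<noteq> (0::complex)" using moebius_denom_nonzero[OF assms] .
  show ?thesis
    unfolding slash2_moebius_int moebius_int_comp[OF nz] moebius_int_denom_comp[OF nz]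
    using nz by (simp add: power_divide field_simps)
qed

lemma Im_mult_norm_slash2:
  assumes "a * d - b * c = (1::int)" "Im z > 0"
  shows "Im (moebius_int a b c d z) * cmod (f (moebius_int a b c d z)) = Im z * cmod (slash2 f a b c d z)"
  using moebius_denom_nonzero[OF assms]
  by (simp add: Im_moebius_int[OF assms(1)] slash2_moebius_int norm_divide norm_power)

lemma Im_neg_inverse: "Im (-1 / w) = Im w / (cmod w)\<^sup>2"
  by (simp add: Im_divide cmod_power2)

lemma Im_neg_inverse_pos:
  assumes "Im w > 0"
  shows "Im (-1 / w) > 0"
proof -
  have "w \<noteq> 0" using assms by auto
  then show ?thesis unfolding Im_neg_inverse using assms by simp
qed

inductive_set modular_orbit :: "complex \<Rightarrow> complex set" for z where
  base: "z \<in> modular_orbit z"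
| translate: "w \<in> modular_orbit z \<Longrightarrow> w + of_int k \<in> modular_orbit z"
| invert: "w \<in> modular_orbit z \<Longrightarrow> -1 / w \<in> modular_orbit z"

lemma modular_orbit_moebius_int:
  assumes "Im z > 0" "w \<in> modular_orbit z"
  obtains a b c d where "a * d - b * c = (1::int)" "w = moebius_int a b c d z"
  using assms(2)
proof (induction arbitrary: thesis)
  case base
  have "1 * 1 - 0 * 0 = (1::int)" "z = moebius_int 1 0 0 1 z" by (simp_all add: moebius_int_def)
  then show ?case using base.prems by blast
next
  case (translate w k)
  then obtain a b c d where h: "a * d - b * c = (1::int)" "w = moebius_int a b c d z" by blast
  have "(a + k * c) * d - (b + k * d) * c = 1" using h(1) by (simp add: algebra_simps)
  moreover have "w + of_int k = moebius_int (a + k * c) (b + k * d) c d z"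
    using moebius_denom_nonzero[OF h(1) assms(1)] h(2) by (simp add: moebius_int_def field_simps)
  ultimately show ?case using translate.prems by blast
next
  case (invert w)
  then obtain a b c d where h: "a * d - b * c = (1::int)" "w = moebius_int a b c d z" by blast
  have "(- c) * b - (- d) * a = 1" using h(1) by (simp add: algebra_simps)
  moreover have "-1 / w = moebius_int (- c) (- d) a b z"
    using h(2) by (simp add: moebius_int_def)
  ultimately show ?case using invert.prems by blast
qed

lemma modular_orbit_Im_pos: "Im z > 0 \<Longrightarrow> w \<in> modular_orbit z \<Longrightarrow> Im w > 0"
  by (metis modular_orbit_moebius_int Im_moebius_int_pos)

lemma finite_int_lincomb_norm_le:
  assumes "Im z > 0"
  shows "finite {(c::int, d::int). cmod (of_int c * z + of_int d) \<le> 1}"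
proof -
  define C where "C = \<lceil>1 / Im z\<rceil>"
  define D where "D = \<lceil>1 + real_of_int C * cmod z\<rceil>"
  have "{(c::int, d::int). cmod (of_int c * z + of_int d) \<le> 1} \<subseteq> {-C..C} \<times> {-D..D}"
  proof clarify
    fix c d :: int
    assume h: "cmod (of_int c * z + of_int d) \<le> 1"
    have "\<bar>real_of_int c\<bar> * Im z \<le> 1"
      using h abs_Im_le_cmod[of "of_int c * z + of_int d"] assms by (simp add: abs_mult)
    then have "\<bar>real_of_int c\<bar> \<le> 1 / Im z" using assms by (simp add: field_simps)
    then have c: "\<bar>c\<bar> \<le> C" unfolding C_def by linarith
    have "cmod (of_int d) \<le> cmod (of_int c * z + of_int d) + cmod (of_int c * z)"
      by (metis add_diff_cancel_left' norm_triangle_ineq4 add.commute)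
    also have "\<dots> \<le> 1 + real_of_int C * cmod z"
      using h c by (auto simp: norm_mult intro!: add_mono mult_right_mono)
    finally have "\<bar>d\<bar> \<le> D" unfolding D_def by simp linarith
    with c show "c \<in> {-C..C} \<and> d \<in> {-D..D}" by auto
  qed
  then show ?thesis by (rule finite_subset) simp
qed

lemma modular_orbit_Im_attains_max:
  assumes "Im z > 0"
  obtains w0 where "w0 \<in> modular_orbit z" "\<And>w. w \<in> modular_orbit z \<Longrightarrow> Im w \<le> Im w0"
proof -
  define V where "V = Im ` {w \<in> modular_orbit z. Im w \<ge> Im z}"
  have "V \<subseteq> (\<lambda>(c,d). Im z / (cmod (of_int c * z + of_int d))\<^sup>2) `
            {(c::int, d::int). cmod (of_int c * z + of_int d) \<le> 1}"
  proof
    fix v assume "v \<in> V"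
    then obtain w where w: "w \<in> modular_orbit z" "Im w \<ge> Im z" "v = Im w" unfolding V_def by auto
    then obtain a b c d where h: "a * d - b * c = (1::int)" "w = moebius_int a b c d z"
      using modular_orbit_moebius_int assms by blast
    have eq: "Im w = Im z / (cmod (of_int c * z + of_int d))\<^sup>2"
      using Im_moebius_int[OF h(1)] h(2) by simp
    have "cmod (of_int c * z + of_int d) \<le> 1"
    proof (rule ccontr)
      assume "\<not> ?thesis"
      then have "Im z / (cmod (of_int c * z + of_int d))\<^sup>2 < Im z"
        using assms by (simp add: divide_less_eq one_less_power)
      then show False using eq w(2) by simp
    qed
    then show "v \<in> (\<lambda>(c,d). Im z / (cmod (of_int c * z + of_int d))\<^sup>2) `
            {(c::int, d::int). cmod (of_int c * z + of_int d) \<le> 1}"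
      using eq w(3) by (auto intro!: image_eqI[of _ _ "(c,d)"])
  qed
  then have "finite V" using finite_int_lincomb_norm_le[OF assms] finite_surj by blast
  moreover have "Im z \<in> V" unfolding V_def using modular_orbit.base by auto
  ultimately have "Max V \<in> V" "\<And>v. v \<in> V \<Longrightarrow> v \<le> Max V" by (auto intro: Max_in)
  then obtain w0 where "w0 \<in> modular_orbit z" "Im w0 = Max V" "Im w0 \<ge> Im z"
    unfolding V_def by auto
  then show ?thesis
    using that[of w0] \<open>\<And>v. v \<in> V \<Longrightarrow> v \<le> Max V\<close> unfolding V_def by force
qed

lemma modular_orbit_reduce:
  assumes "Im z > 0"
  obtains w where "w \<in> modular_orbit z" "\<bar>Re w\<bar> \<le> 1/2" "Im w \<ge> 4/5"
proof -
  obtain w0 where w0: "w0 \<in> modular_orbit z" "\<And>w. w \<in> modular_orbit z \<Longrightarrow> Im w \<le> Im w0"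
    using modular_orbit_Im_attains_max[OF assms] by blast
  define w where "w = w0 + of_int (- \<lfloor>Re w0 + 1/2\<rfloor>)"
  have w: "w \<in> modular_orbit z" unfolding w_def by (rule modular_orbit.translate[OF w0(1)])
  have "Re w = Re w0 - of_int \<lfloor>Re w0 + 1/2\<rfloor>" unfolding w_def by simp
  then have Re: "\<bar>Re w\<bar> \<le> 1/2"
    using of_int_floor_le[of "Re w0 + 1/2"] real_of_int_floor_add_one_gt[of "Re w0 + 1/2"] by linarith
  have Im: "Im w > 0" using modular_orbit_Im_pos[OF assms w] .
  have "Im w = Im w0" unfolding w_def by simp
  then have "Im w / (cmod w)\<^sup>2 \<le> Im w"
    using w0(2)[OF modular_orbit.invert[OF w]] by (simp only: Im_neg_inverse)
  moreover have "w \<noteq> 0" using Im by auto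
  ultimately have "1 \<le> (cmod w)\<^sup>2"
    using Im by (simp add: divide_le_eq mult_le_cancel_left1)
  also have "\<dots> = (Re w)\<^sup>2 + (Im w)\<^sup>2" by (simp add: cmod_power2)
  finally have "(4/5)\<^sup>2 < (Im w)\<^sup>2"
    using Re abs_le_square_iff[of "Re w" "1/2"] by (simp add: power2_eq_square)
  then have "4/5 < Im w" using power_less_imp_less_base[of "4/5" 2 "Im w"] Im by simp
  then show ?thesis by (intro that[OF w Re]) simp
qed

section \<open>The coordinate q = exp(2 pi i tau)\<close>

definition e2pi :: "complex \<Rightarrow> complex" where
  "e2pi z = exp (2 * of_real pi * \<i> * z)"

definition log2pi :: "complex \<Rightarrow> complex" where
  "log2pi q = Ln q / (2 * of_real pi * \<i>)"

text \<open>The shapes in which exp (2 pi i z) occurs in the definitions of weight2_cusp_form,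
  qexp_inf and qexp_zero.\<close>
lemma exp_eq_e2pi:
  "exp (2 * of_real pi * \<i> * z) = e2pi z"
  "exp (of_real (2 * pi) * \<i> * z) = e2pi z"
  "exp (2 * of_real pi * \<i> * z / w) = e2pi (z / w)"
  "exp (of_real (2 * pi) * \<i> * z / w) = e2pi (z / w)"
  by (simp_all add: e2pi_def)

lemma e2pi_nonzero [simp]: "e2pi z \<noteq> 0"
  by (simp add: e2pi_def)

lemma e2pi_add: "e2pi (z + w) = e2pi z * e2pi w"
  by (simp add: e2pi_def distrib_left exp_add)

lemma e2pi_of_int [simp]: "e2pi (of_int n) = 1"
  unfolding e2pi_def exp_eq_1 by (intro conjI exI[of _ n]) simp_all

lemma e2pi_of_nat [simp]: "e2pi (of_nat n) = 1"
  using e2pi_of_int[of "int n"] by simp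

lemma e2pi_one [simp]: "e2pi 1 = 1"
  using e2pi_of_int[of 1] by simp

lemma e2pi_of_nat_mult: "e2pi (of_nat n * z) = e2pi z ^ n"
  by (simp add: e2pi_def exp_of_nat_mult[symmetric] algebra_simps)

lemma e2pi_eqD:
  assumes "e2pi t1 = e2pi t2"
  obtains n :: int where "t1 = t2 + of_int n"
proof -
  obtain n :: int where
    "2 * of_real pi * \<i> * t1 = 2 * of_real pi * \<i> * t2 + (of_int (2 * n) * pi) * \<i>"
    using assms exp_eq unfolding e2pi_def by blast
  then have "2 * of_real pi * \<i> * t1 = 2 * of_real pi * \<i> * (t2 + of_int n)"
    by (simp add: algebra_simps)
  then show ?thesis using that by simp
qed

lemma norm_e2pi: "cmod (e2pi t) = exp (- 2 * pi * Im t)"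
  by (simp add: norm_exp_eq_Re e2pi_def)

lemma Im_log2pi: "q \<noteq> 0 \<Longrightarrow> Im (log2pi q) = - ln (cmod q) / (2 * pi)"
  by (simp add: log2pi_def Im_divide power2_eq_square field_simps)

lemma Im_log2pi_pos: "q \<noteq> 0 \<Longrightarrow> cmod q < 1 \<Longrightarrow> Im (log2pi q) > 0"
  by (simp add: Im_log2pi divide_neg_pos)

lemma e2pi_log2pi [simp]: "q \<noteq> 0 \<Longrightarrow> e2pi (log2pi q) = q"
  by (simp add: e2pi_def log2pi_def)

lemma holomorphic_on_log2pi: "S \<inter> \<real>\<^sub>\<le>\<^sub>0 = {} \<Longrightarrow> log2pi holomorphic_on S"
  unfolding log2pi_def by (intro holomorphic_intros) (auto simp: disjoint_iff)

lemma tendsto_e2pi_log2pi_div: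
  assumes "N > 0"
  shows "((\<lambda>q. e2pi (log2pi q / of_nat N)) \<longlongrightarrow> 0) (at 0)"
proof (rule tendsto_norm_zero_cancel)
  have "((\<lambda>q. cmod q powr (1 / real N)) \<longlongrightarrow> 0) (at (0::complex))"
    by (rule tendsto_zero_powrI) (use assms in \<open>auto intro!: tendsto_norm_zero tendsto_ident_at\<close>)
  moreover have "cmod q powr (1 / real N) = cmod (e2pi (log2pi q / of_nat N))" if "q \<noteq> 0" for q
  proof -
    have "e2pi (log2pi q / of_nat N) = exp (Ln q / of_nat N)" by (simp add: e2pi_def log2pi_def)
    moreover have "Re (Ln q / of_nat N) = ln (cmod q) / real N" using that by simp
    ultimately show ?thesis using that by (simp add: powr_def norm_exp_eq_Re)
  qed
  then have "\<forall>\<^sub>F q in at 0. cmod q powr (1 / real N) = cmod (e2pi (log2pi q / of_nat N))"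
    by (auto simp: eventually_at_filter)
  ultimately show "((\<lambda>q. cmod (e2pi (log2pi q / of_nat N))) \<longlongrightarrow> 0) (at 0)"
    by (rule Lim_transform_eventually)
qed

lemma holomorphic_on_ball_eq_if_eq_on_e2pi:
  assumes "A holomorphic_on ball 0 1" "B holomorphic_on ball 0 1"
    and "\<And>\<tau>. Im \<tau> > 0 \<Longrightarrow> A (e2pi \<tau>) = B (e2pi \<tau>)"
    and "q \<in> ball 0 1"
  shows "A q = B q"
proof -
  have "(\<lambda>x. A x - B x) q = 0"
  proof (rule analytic_continuation[of "\<lambda>x. A x - B x" "ball 0 1" "ball 0 1 - {0}" 0 q])
    show "(\<lambda>x. A x - B x) holomorphic_on ball 0 1"
      using assms(1,2) by (intro holomorphic_intros)
    show "(0::complex) islimpt ball 0 1 - {0}"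
      using islimpt_punctured[of "0::complex" "ball 0 1"] islimpt_ball[of "0::complex" 0 1] by simp
    show "A x - B x = 0" if "x \<in> ball 0 1 - {0}" for x
      using assms(3)[of "log2pi x"] that by (simp add: Im_log2pi_pos)
  qed (use assms(4) in auto)
  then show ?thesis by simp
qed

lemma holomorphic_on_comp_log2pi_if_local_inverse:
  assumes hol: "g holomorphic_on uhp"
    and per: "\<And>\<tau> n. Im \<tau> > 0 \<Longrightarrow> g (\<tau> + of_int n) = g \<tau>"
    and L: "L holomorphic_on U" and LU: "\<And>q. q \<in> U \<Longrightarrow> Im (L q) > 0 \<and> e2pi (L q) = q"
  shows "(\<lambda>q. g (log2pi q)) holomorphic_on U"
proof -
  have "(g \<circ> L) holomorphic_on U"
    by (rule holomorphic_on_compose_gen[OF L hol]) (use LU in \<open>auto simp: mem_uhp_iff\<close>)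
  then have "(\<lambda>q. g (L q)) holomorphic_on U" by (simp add: o_def)
  moreover have "g (L q) = g (log2pi q)" if "q \<in> U" for q
  proof -
    have q: "Im (L q) > 0" "e2pi (L q) = q" using LU that by auto
    then have "q \<noteq> 0" using e2pi_nonzero by metis
    then have "e2pi (log2pi q) = e2pi (L q)" using q by simp
    then obtain n where "log2pi q = L q + of_int n" by (rule e2pi_eqD)
    then show ?thesis using per q(1) by simp
  qed
  ultimately show ?thesis by (rule holomorphic_transform)
qed

lemma holomorphic_on_punctured_disc_if_periodic:
  assumes hol: "g holomorphic_on uhp"
    and per: "\<And>\<tau> n. Im \<tau> > 0 \<Longrightarrow> g (\<tau> + of_int n) = g \<tau>"
  shows "(\<lambda>q. g (log2pi q)) holomorphic_on ball 0 1 - {0}"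
proof -
  note local_branch = holomorphic_on_comp_log2pi_if_local_inverse[OF hol per]
  define U1 where "U1 = ball (0::complex) 1 - {q. Im q = 0 \<and> Re q \<le> 0}"
  define U2 where "U2 = ball (0::complex) 1 - {q. Im q = 0 \<and> Re q \<ge> 0}"
  have "open U1" "open U2" unfolding U1_def U2_def
    by (intro open_Diff closed_Collect_conj closed_Collect_eq closed_Collect_le
        continuous_intros open_ball)+
  moreover have "(\<lambda>q. g (log2pi q)) holomorphic_on U1"
  proof (rule local_branch)
    show "log2pi holomorphic_on U1"
      by (rule holomorphic_on_log2pi) (auto simp: U1_def complex_nonpos_Reals_iff)
    fix q assume "q \<in> U1"
    then have "q \<noteq> 0" "cmod q < 1" by (auto simp: U1_def)
    then show "Im (log2pi q) > 0 \<and> e2pi (log2pi q) = q" by (simp add: Im_log2pi_pos)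
  qed
  moreover have "(\<lambda>q. g (log2pi q)) holomorphic_on U2"
  proof (rule local_branch)
    have "log2pi holomorphic_on uminus ` U2"
      by (rule holomorphic_on_log2pi) (auto simp: U2_def complex_nonpos_Reals_iff)
    then show "(\<lambda>q. log2pi (- q) + 1/2) holomorphic_on U2"
      by (intro holomorphic_intros holomorphic_on_compose[of uminus, unfolded o_def]) auto
    have "e2pi (1/2) = -1" by (simp add: e2pi_def)
    moreover fix q assume "q \<in> U2"
    then have "- q \<noteq> 0" "cmod (- q) < 1" by (auto simp: U2_def)
    ultimately show "Im (log2pi (- q) + 1/2) > 0 \<and> e2pi (log2pi (- q) + 1/2) = q"
      by (simp add: e2pi_add Im_log2pi_pos)
  qed
  moreover have "U1 \<union> U2 = ball 0 1 - {0}"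
    unfolding U1_def U2_def by (auto simp: complex_eq_iff)
  ultimately show ?thesis using holomorphic_on_Un by metis
qed

section \<open>q-expansions of cusp forms\<close>

locale cusp_form =
  fixes N :: nat and f :: "complex \<Rightarrow> complex"
  assumes level_pos: "N > 0" and cusp_form: "weight2_cusp_form N f"
begin

lemma holomorphic: "f holomorphic_on uhp"
  using cusp_form unfolding weight2_cusp_form_def by blast

lemma slash2_invariant:
  "a * d - b * c = 1 \<Longrightarrow> int N dvd c \<Longrightarrow> Im \<tau> > 0 \<Longrightarrow> slash2 f a b c d \<tau> = f \<tau>"
  using cusp_form unfolding weight2_cusp_form_def by (auto simp: mem_uhp_iff)

lemma cusp_expansion:
  assumes "a * d - b * c = 1"
  obtains h where "h holomorphic_on ball 0 1" "h 0 = 0"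
    "\<And>\<tau>. Im \<tau> > 0 \<Longrightarrow> slash2 f a b c d \<tau> = h (e2pi (\<tau> / of_nat N))"
  using cusp_form assms unfolding weight2_cusp_form_def by (force simp: mem_uhp_iff exp_eq_e2pi)

lemma translate_invariant: "Im \<tau> > 0 \<Longrightarrow> f (\<tau> + of_int n) = f \<tau>"
  using slash2_invariant[of 1 1 n 0 \<tau>] by (simp add: slash2_def add.commute)

lemma exists_qexp_inf:
  "\<exists>F. F holomorphic_on ball 0 1 \<and> F 0 = 0 \<and> (\<forall>\<tau>. Im \<tau> > 0 \<longrightarrow> F (e2pi \<tau>) = f \<tau>)"
proof -
  define F where "F q = (if q = 0 then 0 else f (log2pi q))" for q
  have F_e2pi: "F (e2pi \<tau>) = f \<tau>" if "Im \<tau> > 0" for \<tau>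
  proof -
    obtain n where "log2pi (e2pi \<tau>) = \<tau> + of_int n"
      using e2pi_eqD[of "log2pi (e2pi \<tau>)" \<tau>] by auto
    then show ?thesis using translate_invariant that by (simp add: F_def)
  qed
  have "(\<lambda>q. f (log2pi q)) holomorphic_on ball 0 1 - {0}"
    by (rule holomorphic_on_punctured_disc_if_periodic[OF holomorphic translate_invariant])
  then have hol: "F holomorphic_on ball 0 1 - {0}"
    by (rule holomorphic_transform) (simp add: F_def)
  obtain h where h: "h holomorphic_on ball 0 1" "h 0 = 0"
      "\<And>\<tau>. Im \<tau> > 0 \<Longrightarrow> slash2 f 1 0 0 1 \<tau> = h (e2pi (\<tau> / of_nat N))"
    using cusp_expansion[of 1 1 0 0] by auto
  have "isCont h 0"
    using h(1) holomorphic_on_imp_continuous_on continuous_on_interior[of "ball 0 1" h 0]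
    by (simp add: interior_open)
  then have "((\<lambda>q. h (e2pi (log2pi q / of_nat N))) \<longlongrightarrow> 0) (at 0)"
    using isCont_tendsto_compose[OF _ tendsto_e2pi_log2pi_div[OF level_pos]] h(2) by fastforce
  moreover have "h (e2pi (log2pi q / of_nat N)) = F q" if "q \<noteq> 0" "cmod q < 1" for q
    using h(3)[OF Im_log2pi_pos[OF that]] that by (simp add: F_def slash2_def)
  then have "\<forall>\<^sub>F q in at 0. h (e2pi (log2pi q / of_nat N)) = F q"
    unfolding eventually_at by (intro exI[of _ 1]) (simp add: dist_norm)
  ultimately have lim: "(F \<longlongrightarrow> F 0) (at 0)"
    using Lim_transform_eventually by (fastforce simp: F_def)
  have "F holomorphic_on ball 0 1"
  proof (rule no_isolated_singularity'[where K = "{0}"])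
    show "(F \<longlongrightarrow> F z) (at z within ball 0 1)" if "z \<in> {0}" for z
      using that tendsto_within_subset[OF lim] by simp
  qed (use hol in auto)
  then show ?thesis using F_e2pi by (auto simp: F_def)
qed

lemma
  shows holomorphic_qexp_inf: "qexp_inf f holomorphic_on ball 0 1"
    and qexp_inf_e2pi: "Im \<tau> > 0 \<Longrightarrow> qexp_inf f (e2pi \<tau>) = f \<tau>"
    and qexp_inf_0: "qexp_inf f 0 = 0"
proof -
  obtain F where F: "F holomorphic_on ball 0 1" "F 0 = 0" "\<And>\<tau>. Im \<tau> > 0 \<Longrightarrow> F (e2pi \<tau>) = f \<tau>"
    using exists_qexp_inf by blast
  define P where "P F \<longleftrightarrow> F holomorphic_on ball 0 1 \<and> (\<forall>\<tau>\<in>uhp. f \<tau> = F (e2pi \<tau>))" for F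
  have "qexp_inf f = (SOME F. P F)"
    unfolding qexp_inf_def P_def exp_eq_e2pi ..
  moreover have "P F"
    using F by (auto simp: P_def mem_uhp_iff)
  ultimately have "P (qexp_inf f)"
    using someI[of P F] by simp
  then have Q: "qexp_inf f holomorphic_on ball 0 1" "\<And>\<tau>. Im \<tau> > 0 \<Longrightarrow> qexp_inf f (e2pi \<tau>) = f \<tau>"
    by (auto simp: P_def mem_uhp_iff)
  then show "qexp_inf f holomorphic_on ball 0 1" "Im \<tau> > 0 \<Longrightarrow> qexp_inf f (e2pi \<tau>) = f \<tau>"
    by blast+
  have "qexp_inf f 0 = F 0"
    by (rule holomorphic_on_ball_eq_if_eq_on_e2pi[OF Q(1) F(1)]) (simp_all add: Q(2) F(3))
  then show "qexp_inf f 0 = 0" using F(2) by simp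
qed

lemma exists_qexp_zero:
  "\<exists>G. G holomorphic_on ball 0 1 \<and> G 0 = 0 \<and>
     (\<forall>\<sigma>. Im \<sigma> > 0 \<longrightarrow> G (e2pi \<sigma>) = f (- 1 / (of_nat N * \<sigma>)) / (of_nat N * \<sigma> ^ 2))"
proof -
  obtain h where h: "h holomorphic_on ball 0 1" "h 0 = 0"
      "\<And>\<tau>. Im \<tau> > 0 \<Longrightarrow> slash2 f 0 (-1) 1 0 \<tau> = h (e2pi (\<tau> / of_nat N))"
    using cusp_expansion[of 0 0 "-1" 1] by auto
  have N: "(of_nat N :: complex) \<noteq> 0" using level_pos by simp
  have "of_nat N * h (e2pi \<sigma>) = f (- 1 / (of_nat N * \<sigma>)) / (of_nat N * \<sigma> ^ 2)"
    if "Im \<sigma> > 0" for \<sigma>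
  proof -
    have "Im (of_nat N * \<sigma>) > 0" using that level_pos by simp
    moreover have "of_nat N * \<sigma> / of_nat N = \<sigma>" using N by simp
    ultimately have "h (e2pi \<sigma>) = slash2 f 0 (-1) 1 0 (of_nat N * \<sigma>)"
      using h(3)[of "of_nat N * \<sigma>"] by simp
    also have "\<dots> = f (- 1 / (of_nat N * \<sigma>)) / (of_nat N * \<sigma>)\<^sup>2"
      by (simp add: slash2_def)
    finally show ?thesis using N by (simp add: power2_eq_square field_simps)
  qed
  moreover have "(\<lambda>q. of_nat N * h q) holomorphic_on ball 0 1"
    using h(1) by (intro holomorphic_intros)
  ultimately show ?thesis using h(2) by (intro exI[of _ "\<lambda>q. of_nat N * h q"]) auto
qed

lemma
  shows holomorphic_qexp_zero: "qexp_zero N f holomorphic_on ball 0 1"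
    and qexp_zero_e2pi:
      "Im \<sigma> > 0 \<Longrightarrow> qexp_zero N f (e2pi \<sigma>) = f (- 1 / (of_nat N * \<sigma>)) / (of_nat N * \<sigma> ^ 2)"
    and qexp_zero_0: "qexp_zero N f 0 = 0"
proof -
  obtain G where G: "G holomorphic_on ball 0 1" "G 0 = 0"
      "\<And>\<sigma>. Im \<sigma> > 0 \<Longrightarrow> G (e2pi \<sigma>) = f (- 1 / (of_nat N * \<sigma>)) / (of_nat N * \<sigma> ^ 2)"
    using exists_qexp_zero by blast
  define P where "P G \<longleftrightarrow> G holomorphic_on ball 0 1 \<and>
    (\<forall>\<sigma>\<in>uhp. G (e2pi \<sigma>) = f (- 1 / (of_nat N * \<sigma>)) / (of_nat N * \<sigma> ^ 2))" for G
  have "qexp_zero N f = (SOME G. P G)"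
    unfolding qexp_zero_def P_def exp_eq_e2pi ..
  moreover have "P G"
    using G by (auto simp: P_def mem_uhp_iff)
  ultimately have "P (qexp_zero N f)"
    using someI[of P G] by simp
  then have Q: "qexp_zero N f holomorphic_on ball 0 1"
      "\<And>\<sigma>. Im \<sigma> > 0 \<Longrightarrow> qexp_zero N f (e2pi \<sigma>) = f (- 1 / (of_nat N * \<sigma>)) / (of_nat N * \<sigma> ^ 2)"
    by (auto simp: P_def mem_uhp_iff)
  then show "qexp_zero N f holomorphic_on ball 0 1"
    "Im \<sigma> > 0 \<Longrightarrow> qexp_zero N f (e2pi \<sigma>) = f (- 1 / (of_nat N * \<sigma>)) / (of_nat N * \<sigma> ^ 2)"
    by blast+
  have "qexp_zero N f 0 = G 0"
    by (rule holomorphic_on_ball_eq_if_eq_on_e2pi[OF Q(1) G(1)]) (simp_all add: Q(2) G(3))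
  then show "qexp_zero N f 0 = 0" using G(2) by simp
qed

end

section \<open>Hecke's bound\<close>

lemma mult_exp_neg_le_one: "(x::real) * exp (- x) \<le> 1"
proof -
  have "x \<le> exp x" using exp_ge_add_one_self[of x] by linarith
  then have "x * exp (- x) \<le> exp x * exp (- x)" by (rule mult_right_mono) simp
  then show ?thesis by (simp add: exp_minus)
qed

lemma Im_mult_norm_bounded_if_vanishing_at_cusp:
  assumes h: "h holomorphic_on ball 0 1" "h 0 = 0" and "N > 0" "y0 > 0"
  obtains K where "\<And>\<tau>. Im \<tau> \<ge> y0 \<Longrightarrow> Im \<tau> * cmod (h (e2pi (\<tau> / of_nat N))) \<le> K"
proof -
  obtain k where k: "k holomorphic_on ball 0 1" "\<And>z. cmod z < 1 \<Longrightarrow> h z = z * k z"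
    using Schwarz3[OF h] by metis
  define \<rho> where "\<rho> = exp (- 2 * pi * y0 / real N)"
  have "\<rho> < 1" unfolding \<rho>_def using assms by simp
  then have "cball 0 \<rho> \<subseteq> ball 0 1" by auto
  then have "continuous_on (cball 0 \<rho>) k"
    by (rule holomorphic_on_imp_continuous_on[OF holomorphic_on_subset[OF k(1)]])
  then have "compact (k ` cball 0 \<rho>)"
    by (rule compact_continuous_image) simp
  then have "bounded (k ` cball 0 \<rho>)" by (rule compact_imp_bounded)
  then obtain B where "B > 0" "\<And>z. z \<in> cball 0 \<rho> \<Longrightarrow> cmod (k z) \<le> B"
    unfolding bounded_pos by auto
  then have B: "B \<ge> 0" "\<And>z. cmod z \<le> \<rho> \<Longrightarrow> cmod (k z) \<le> B" by auto
  have "Im \<tau> * cmod (h (e2pi (\<tau> / of_nat N))) \<le> real N / (2 * pi) * B" if "Im \<tau> \<ge> y0" for \<tau>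
  proof -
    define x where "x = 2 * pi * Im \<tau> / real N"
    have w: "cmod (e2pi (\<tau> / of_nat N)) = exp (- x)"
      unfolding x_def norm_e2pi by simp
    have "x \<ge> 2 * pi * y0 / real N"
      unfolding x_def using that by (intro divide_right_mono mult_left_mono) auto
    moreover have "2 * pi * y0 / real N > 0" using assms by simp
    ultimately have "exp (- x) \<le> \<rho>" "exp (- x) < 1" unfolding \<rho>_def by auto
    then have "cmod (h (e2pi (\<tau> / of_nat N))) = exp (- x) * cmod (k (e2pi (\<tau> / of_nat N)))"
      using k(2) w by (simp add: norm_mult)
    also have "\<dots> \<le> exp (- x) * B"
      using B(2) w \<open>exp (- x) \<le> \<rho>\<close> by (intro mult_left_mono) auto
    finally have "cmod (h (e2pi (\<tau> / of_nat N))) \<le> exp (- x) * B" .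
    then have "Im \<tau> * cmod (h (e2pi (\<tau> / of_nat N))) \<le> Im \<tau> * (exp (- x) * B)"
      using that assms(4) by (intro mult_left_mono) auto
    also have "\<dots> = real N / (2 * pi) * (x * exp (- x)) * B"
      unfolding x_def using assms(3) by (simp add: field_simps)
    also have "\<dots> \<le> real N / (2 * pi) * 1 * B"
      using mult_exp_neg_le_one[of x] B(1) by (intro mult_right_mono mult_left_mono) auto
    finally show ?thesis by simp
  qed
  then show ?thesis using that by blast
qed

context cusp_form
begin

lemma slash2_eq_if_bottom_row_cong:
  assumes det1: "a1 * d1 - b1 * c1 = 1" and det2: "a2 * d2 - b2 * c2 = 1"
    and "c1 mod int N = c2 mod int N" "d1 mod int N = d2 mod int N"
    and "Im \<sigma> > 0"
  shows "slash2 f a1 b1 c1 d1 \<sigma> = slash2 f a2 b2 c2 d2 \<sigma>"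
proof -
  \<comment> \<open>the matrix with entries g1, g2, g3, g4 is the quotient of the two matrices; it lies in Gamma_0(N)\<close>
  define g1 where "g1 = a1 * d2 - b1 * c2"
  define g2 where "g2 = - a1 * b2 + b1 * a2"
  define g3 where "g3 = c1 * d2 - d1 * c2"
  define g4 where "g4 = - c1 * b2 + d1 * a2"
  have "g1 * g4 - g2 * g3 = (a1 * d1 - b1 * c1) * (a2 * d2 - b2 * c2)"
    unfolding g1_def g2_def g3_def g4_def by (simp add: algebra_simps)
  then have det: "g1 * g4 - g2 * g3 = 1" using det1 det2 by simp
  have "int N dvd (c1 - c2) * d2 - (d1 - d2) * c2"
    using assms(3,4) by (simp add: mod_eq_dvd_iff)
  then have dvd: "int N dvd g3" unfolding g3_def by (simp add: algebra_simps)
  have "g1 * a2 + g2 * c2 = a1 * (a2 * d2 - b2 * c2)" "g1 * b2 + g2 * d2 = b1 * (a2 * d2 - b2 * c2)"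
    "g3 * a2 + g4 * c2 = c1 * (a2 * d2 - b2 * c2)" "g3 * b2 + g4 * d2 = d1 * (a2 * d2 - b2 * c2)"
    unfolding g1_def g2_def g3_def g4_def by (simp_all add: algebra_simps)
  then have "g1 * a2 + g2 * c2 = a1" "g1 * b2 + g2 * d2 = b1" "g3 * a2 + g4 * c2 = c1" "g3 * b2 + g4 * d2 = d1"
    using det2 by simp_all
  then have "slash2 f a1 b1 c1 d1 \<sigma> = slash2 (slash2 f g1 g2 g3 g4) a2 b2 c2 d2 \<sigma>"
    using slash2_slash2[OF det2 assms(5), of f g1 g2 g3 g4] by simp
  also have "\<dots> = slash2 f a2 b2 c2 d2 \<sigma>"
    using slash2_invariant[OF det dvd Im_moebius_int_pos[OF det2 assms(5)]]
    by (simp add: slash2_moebius_int)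
  finally show ?thesis .
qed

lemma slash2_Im_bounded:
  obtains K where "\<And>a b c d \<sigma>. a * d - b * c = 1 \<Longrightarrow> Im \<sigma> \<ge> 4/5 \<Longrightarrow>
    Im \<sigma> * cmod (slash2 f a b c d \<sigma>) \<le> K"
proof -
  define P where "P = {0..<int N} \<times> {0..<int N}"
  define bounds where "bounds x K \<longleftrightarrow> (\<forall>a b c d \<sigma>. a * d - b * c = 1 \<and> (c mod int N, d mod int N) = x
       \<and> Im \<sigma> \<ge> 4/5 \<longrightarrow> Im \<sigma> * cmod (slash2 f a b c d \<sigma>) \<le> K)" for x K
  have "\<exists>K. bounds x K" for x
  proof (cases "\<exists>a b c d. a * d - b * c = 1 \<and> (c mod int N, d mod int N) = x")
    case True
    then obtain a0 b0 c0 d0 where x: "a0 * d0 - b0 * c0 = 1" "(c0 mod int N, d0 mod int N) = x"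
      by blast
    obtain h where h: "h holomorphic_on ball 0 1" "h 0 = 0"
        "\<And>\<tau>. Im \<tau> > 0 \<Longrightarrow> slash2 f a0 b0 c0 d0 \<tau> = h (e2pi (\<tau> / of_nat N))"
      using cusp_expansion[OF x(1)] by metis
    obtain K where K: "\<And>\<tau>. Im \<tau> \<ge> 4/5 \<Longrightarrow> Im \<tau> * cmod (h (e2pi (\<tau> / of_nat N))) \<le> K"
      using Im_mult_norm_bounded_if_vanishing_at_cusp[OF h(1,2) level_pos, of "4/5"] by auto
    have "bounds x K"
      unfolding bounds_def
    proof (intro allI impI, elim conjE)
      fix a b c d \<sigma> assume "a * d - b * c = 1" "(c mod int N, d mod int N) = x" "Im \<sigma> \<ge> 4/5"
      then show "Im \<sigma> * cmod (slash2 f a b c d \<sigma>) \<le> K"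
        using slash2_eq_if_bottom_row_cong[of a d b c a0 d0 b0 c0 \<sigma>] x h(3) K by auto
    qed
    then show ?thesis by blast
  next
    case False
    then have "bounds x 0" unfolding bounds_def by blast
    then show ?thesis by blast
  qed
  then obtain K where K: "\<And>x. bounds x (K x)" by metis
  show ?thesis
  proof (rule that[of "\<Sum>x\<in>P. \<bar>K x\<bar>"])
    fix a b c d :: int and \<sigma> :: complex
    assume "a * d - b * c = 1" "Im \<sigma> \<ge> 4/5"
    then have "Im \<sigma> * cmod (slash2 f a b c d \<sigma>) \<le> K (c mod int N, d mod int N)"
      using K unfolding bounds_def by blast
    also have "\<dots> \<le> \<bar>K (c mod int N, d mod int N)\<bar>" by simp
    also have "\<dots> \<le> (\<Sum>x\<in>P. \<bar>K x\<bar>)"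
      using level_pos by (intro member_le_sum) (auto simp: P_def)
    finally show "Im \<sigma> * cmod (slash2 f a b c d \<sigma>) \<le> (\<Sum>x\<in>P. \<bar>K x\<bar>)" .
  qed
qed

lemma Im_mult_norm_bounded:
  obtains M where "\<And>\<tau>. Im \<tau> > 0 \<Longrightarrow> Im \<tau> * cmod (f \<tau>) \<le> M"
proof -
  obtain K where K: "\<And>a b c d \<sigma>. a * d - b * c = 1 \<Longrightarrow> Im \<sigma> \<ge> 4/5 \<Longrightarrow>
      Im \<sigma> * cmod (slash2 f a b c d \<sigma>) \<le> K"
    using slash2_Im_bounded by blast
  have "Im \<tau> * cmod (f \<tau>) \<le> K" if \<tau>: "Im \<tau> > 0" for \<tau>
  proof -
    obtain w where w: "w \<in> modular_orbit \<tau>" "Im w \<ge> 4/5"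
      using modular_orbit_reduce[OF \<tau>] by blast
    obtain a b c d where det: "a * d - b * c = (1::int)" and w_eq: "w = moebius_int a b c d \<tau>"
      using modular_orbit_moebius_int[OF \<tau> w(1)] by blast
    have det': "d * a - (-b) * (-c) = (1::int)" using det by (simp add: algebra_simps)
    have "moebius_int d (-b) (-c) a w = \<tau>" using moebius_int_inverse[OF det \<tau>] w_eq by simp
    then have "Im \<tau> * cmod (f \<tau>) = Im w * cmod (slash2 f d (-b) (-c) a w)"
      using Im_mult_norm_slash2[OF det', of w f] w(2) by simp
    also have "\<dots> \<le> K" using K[OF det' w(2)] .
    finally show ?thesis .
  qed
  then show ?thesis using that by blast
qed

lemma fcoeff_0: "fcoeff f 0 = 0"
  by (simp add: fcoeff_def qexp_inf_0)

text \<open>Hecke's estimate: Cauchy's inequality for the q-expansion on the circle of radius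
  exp (-1/n), which is the image of the line Im tau = 1/(2 pi n).\<close>
lemma norm_fcoeff_le_linear:
  obtains C where "\<And>n. cmod (fcoeff f n) \<le> C * real n"
proof -
  obtain M where M: "\<And>\<tau>. Im \<tau> > 0 \<Longrightarrow> Im \<tau> * cmod (f \<tau>) \<le> M"
    using Im_mult_norm_bounded by blast
  have "cmod (fcoeff f n) \<le> (2 * pi * exp 1 * M) * real n" for n
  proof (cases "n = 0")
    case True then show ?thesis by (simp add: fcoeff_0)
  next
    case False
    define \<rho> where "\<rho> = exp (- 1 / real n)"
    have \<rho>: "\<rho> > 0" "\<rho> < 1" unfolding \<rho>_def using False by auto
    have bound: "cmod (qexp_inf f x) \<le> 2 * pi * real n * M" if "cmod (0 - x) = \<rho>" for x
    proof -
      have x: "x \<noteq> 0" "cmod x < 1" using that \<rho> by auto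
      have "Im (log2pi x) = 1 / (2 * pi * real n)"
        using Im_log2pi[OF x(1)] that unfolding \<rho>_def by simp
      then have "cmod (f (log2pi x)) = 2 * pi * real n * (Im (log2pi x) * cmod (f (log2pi x)))"
        using False by simp
      also have "\<dots> \<le> 2 * pi * real n * M"
        using M[OF Im_log2pi_pos[OF x]] by (intro mult_left_mono) auto
      finally show ?thesis
        using qexp_inf_e2pi[OF Im_log2pi_pos[OF x]] x by simp
    qed
    have sub: "cball 0 \<rho> \<subseteq> ball (0::complex) 1" using \<rho> by auto
    have "cmod ((deriv ^^ n) (qexp_inf f) 0) \<le> fact n * (2 * pi * real n * M) / \<rho> ^ n"
    proof (rule Cauchy_inequality[OF _ _ \<rho>(1) bound])
      show "qexp_inf f holomorphic_on ball 0 \<rho>"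
        using sub ball_subset_cball by (blast intro: holomorphic_on_subset[OF holomorphic_qexp_inf])
      show "continuous_on (cball 0 \<rho>) (qexp_inf f)"
        using sub by (rule holomorphic_on_imp_continuous_on[OF holomorphic_on_subset[OF holomorphic_qexp_inf]])
    qed
    moreover have "\<rho> ^ n = exp (-1)"
      unfolding \<rho>_def using False by (simp add: exp_of_nat_mult[symmetric])
    ultimately show ?thesis
      unfolding fcoeff_def by (simp add: norm_divide exp_minus field_simps)
  qed
  then show ?thesis using that by blast
qed

end

section \<open>Coefficient bounds for normalized eigenforms\<close>

definition weighted_coeff :: "(nat \<Rightarrow> complex) \<Rightarrow> nat \<Rightarrow> real \<Rightarrow> real" where
  "weighted_coeff a n y = cmod (a n) * y * exp (- 2 * pi * real n * y)"

lemma weighted_coeff_le: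
  assumes C: "\<And>n. cmod (a n) \<le> C * real n" and "y > 0"
  shows "weighted_coeff a n y \<le> C / (2 * pi)"
proof -
  have "C \<ge> 0" using C[of 1] norm_ge_zero[of "a 1"] by linarith
  have "weighted_coeff a n y \<le> C * real n * y * exp (- 2 * pi * real n * y)"
    unfolding weighted_coeff_def using C[of n] \<open>y > 0\<close> by (intro mult_right_mono) auto
  also have "\<dots> = C / (2 * pi) * ((2 * pi * real n * y) * exp (- (2 * pi * real n * y)))"
    by (simp add: field_simps)
  also have "\<dots> \<le> C / (2 * pi)"
    using mult_exp_neg_le_one[of "2 * pi * real n * y"] \<open>C \<ge> 0\<close> by (intro mult_left_le) auto
  finally show ?thesis .
qed

text \<open>The weights are chosen so that the terms a_(l n) and a_(n/l) of a Hecke relation at (n, y)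
  become weighted coefficients at (l n, y/l) and (n/l, l y).\<close>
lemma weighted_coeff_hecke_relation:
  assumes l: "l \<ge> 1" and mu: "mu \<ge> 0" and "y > 0"
    and rel: "cmod lam * cmod (a n) \<le> cmod (a (l * n)) + (if l dvd n then mu * cmod (a (n div l)) else 0)"
  shows "cmod lam * weighted_coeff a n y \<le> real l * weighted_coeff a (l * n) (y / real l) +
    (if l dvd n then mu / real l * weighted_coeff a (n div l) (real l * y) else 0)"
proof -
  define E where "E = y * exp (- 2 * pi * real n * y)"
  have "E \<ge> 0" unfolding E_def using \<open>y > 0\<close> by simp
  have "cmod lam * weighted_coeff a n y = cmod lam * cmod (a n) * E"
    unfolding weighted_coeff_def E_def by simp
  also have "\<dots> \<le> (cmod (a (l * n)) + (if l dvd n then mu * cmod (a (n div l)) else 0)) * E"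
    using rel \<open>E \<ge> 0\<close> by (rule mult_right_mono)
  also have "\<dots> = real l * weighted_coeff a (l * n) (y / real l) +
      (if l dvd n then mu / real l * weighted_coeff a (n div l) (real l * y) else 0)"
    unfolding weighted_coeff_def E_def using l by (auto simp: field_simps elim!: dvdE)
  finally show ?thesis .
qed

text \<open>Hecke's bound a_n = O(n) turns an approximate eigenvalue relation into a bound for the
  eigenvalue, by comparing the relation with the supremum of the weighted coefficients.\<close>
lemma hecke_eigenvalue_bound:
  fixes a :: "nat \<Rightarrow> complex" and lam :: complex and l :: nat and mu C :: real
  assumes C: "\<And>n. cmod (a n) \<le> C * real n" and l: "l \<ge> 1" and a1: "a 1 \<noteq> 0" and mu: "mu \<ge> 0"
    and rel: "\<And>n. cmod lam * cmod (a n) \<le>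
      cmod (a (l * n)) + (if l dvd n then mu * cmod (a (n div l)) else 0)"
  shows "cmod lam \<le> real l + mu / real l"
proof -
  define V where "V = {weighted_coeff a n y | n y. n \<ge> 1 \<and> y > 0}"
  define S where "S = Sup V"
  have bdd: "bdd_above V"
    unfolding V_def using weighted_coeff_le[OF C] by (intro bdd_aboveI) auto
  have le_S: "weighted_coeff a n y \<le> S" if "n \<ge> 1" "y > 0" for n y
    unfolding S_def using that bdd by (intro cSup_upper) (auto simp: V_def)
  have "weighted_coeff a 1 1 > 0" using a1 by (simp add: weighted_coeff_def)
  then have "S > 0" using le_S[of 1 1] by linarith
  have key: "cmod lam * v \<le> (real l + mu / real l) * S" if "v \<in> V" for v
  proof -
    obtain n y where v: "v = weighted_coeff a n y" "n \<ge> 1" "y > 0"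
      using \<open>v \<in> V\<close> unfolding V_def by blast
    have second: "(if l dvd n then mu / real l * weighted_coeff a (n div l) (real l * y) else 0)
        \<le> mu / real l * S"
    proof (cases "l dvd n")
      case True
      then have "n div l \<ge> 1" using v(2) l by (auto elim!: dvdE)
      then have "mu / real l * weighted_coeff a (n div l) (real l * y) \<le> mu / real l * S"
        using le_S[of "n div l" "real l * y"] v(3) l mu by (intro mult_left_mono) auto
      then show ?thesis using True by simp
    qed (use mu \<open>S > 0\<close> in simp)
    have first: "real l * weighted_coeff a (l * n) (y / real l) \<le> real l * S"
      using le_S[of "l * n" "y / real l"] v(2,3) l by (intro mult_left_mono) auto
    have "cmod lam * v \<le> real l * weighted_coeff a (l * n) (y / real l) +
        (if l dvd n then mu / real l * weighted_coeff a (n div l) (real l * y) else 0)"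
      unfolding v(1) by (rule weighted_coeff_hecke_relation[OF l mu v(3) rel])
    also have "\<dots> \<le> real l * S + mu / real l * S" using first second by (rule add_mono)
    finally show ?thesis by (simp add: distrib_right)
  qed
  show ?thesis
  proof (cases "lam = 0")
    case False
    have "Sup V \<le> (real l + mu / real l) * S / cmod lam"
    proof (rule cSup_least)
      have "weighted_coeff a 1 1 \<in> V"
        unfolding V_def by (rule CollectI, rule exI[of _ 1], rule exI[of _ 1]) simp
      then show "V \<noteq> {}" by blast
      show "v \<le> (real l + mu / real l) * S / cmod lam" if "v \<in> V" for v
      proof -
        have "v * cmod lam \<le> (real l + mu / real l) * S" using key[OF that] by (simp only: mult.commute)
        then show ?thesis using False by (simp add: pos_le_divide_eq)
      qed
    qed
    then have "S * cmod lam \<le> (real l + mu / real l) * S"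
      using False unfolding S_def[symmetric] by (simp add: pos_le_divide_eq)
    then have "S * cmod lam \<le> S * (real l + mu / real l)" by (simp only: mult.commute)
    then show ?thesis using \<open>S > 0\<close> by (rule mult_left_le_imp_le)
  qed (use mu in simp)
qed

lemma power_bounds_ge_two:
  fixes l :: real
  assumes "l \<ge> 2"
  shows "l + 1 \<le> l\<^sup>2" and "l ^ 3 + l\<^sup>2 + l \<le> l ^ 4"
proof -
  have "l ^ 4 \<ge> 2 * l ^ 3" "l ^ 3 \<ge> 2 * l\<^sup>2" "l\<^sup>2 \<ge> 2 * l"
    using assms by (simp_all add: power_numeral_reduce power2_eq_square mult_right_mono)
  then show "l + 1 \<le> l\<^sup>2" "l ^ 3 + l\<^sup>2 + l \<le> l ^ 4" using assms by linarith+
qed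

lemma norm_hecke_recursion_le_square:
  fixes a :: "nat \<Rightarrow> complex" and l m :: nat
  assumes l: "real l \<ge> 2" and lam: "cmod lam \<le> real l + 1"
    and rec: "a (l * m) + (if l dvd m then of_nat l * a (m div l) else 0) = lam * a m"
    and IHm: "cmod (a m) \<le> (real m)\<^sup>2" and IHk: "\<And>k. m = l * k \<Longrightarrow> cmod (a k) \<le> (real k)\<^sup>2"
  shows "cmod (a (l * m)) \<le> (real (l * m))\<^sup>2"
proof -
  have an: "a (l * m) = lam * a m - (if l dvd m then of_nat l * a (m div l) else 0)"
    using rec by (metis add_diff_cancel_right')
  have lam_am: "cmod (lam * a m) \<le> (real l + 1) * (real m)\<^sup>2"
    using lam IHm by (simp add: norm_mult mult_mono)
  show ?thesis
  proof (cases "l dvd m")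
    case False
    have "cmod (a (l * m)) \<le> (real l + 1) * (real m)\<^sup>2" using an lam_am False by simp
    also have "\<dots> \<le> (real l)\<^sup>2 * (real m)\<^sup>2"
      using power_bounds_ge_two(1)[OF l] by (intro mult_right_mono) auto
    finally show ?thesis by (simp add: power_mult_distrib)
  next
    case True
    then obtain k where k: "m = l * k" by blast
    have "m div l = k" using k l by simp
    then have "cmod (a (l * m)) \<le> cmod (lam * a m) + real l * cmod (a k)"
      using an True norm_triangle_ineq4[of "lam * a m" "of_nat l * a k"] by (simp add: norm_mult)
    also have "\<dots> \<le> (real l + 1) * (real m)\<^sup>2 + real l * (real k)\<^sup>2"
      using lam_am IHk[OF k] by (intro add_mono mult_left_mono) auto
    also have "\<dots> = (real k)\<^sup>2 * (real l ^ 3 + (real l)\<^sup>2 + real l)"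
      using k by (simp add: power2_eq_square power3_eq_cube algebra_simps)
    also have "\<dots> \<le> (real k)\<^sup>2 * real l ^ 4"
      using power_bounds_ge_two(2)[OF l] by (intro mult_left_mono) auto
    also have "\<dots> = (real (l * m))\<^sup>2" using k by (simp add: power2_eq_square power4_eq_xxxx)
    finally show ?thesis .
  qed
qed

lemma norm_le_square_if_hecke_recursion:
  fixes a :: "nat \<Rightarrow> complex" and p :: nat
  assumes a0: "a 0 = 0" and a1: "a 1 = 1"
    and T: "\<And>l. prime l \<Longrightarrow> l \<noteq> p \<Longrightarrow> \<exists>lam. cmod lam \<le> real l + 1 \<and>
        (\<forall>n. a (l * n) + (if l dvd n then of_nat l * a (n div l) else 0) = lam * a n)"
    and U: "\<exists>lam. cmod lam \<le> real p \<and> (\<forall>n. a (p * n) = lam * a n)"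
  shows "cmod (a n) \<le> (real n)\<^sup>2"
proof (induction n rule: less_induct)
  case (less n)
  consider "n = 0" | "n = 1" | "n \<ge> 2" by linarith
  then show ?case
  proof cases
    case 3
    obtain l where l: "prime l" "l dvd n" using prime_factor_nat[of n] 3 by auto
    then obtain m where m: "n = l * m" by blast
    have l2: "real l \<ge> 2" using prime_ge_2_nat[OF l(1)] by simp
    have "m \<ge> 1" using m 3 by (cases m) auto
    then have "m < n" using m l2 by simp
    then have IHm: "cmod (a m) \<le> (real m)\<^sup>2" by (rule less.IH)
    have IHk: "cmod (a k) \<le> (real k)\<^sup>2" if "m = l * k" for k
    proof (rule less.IH)
      have "0 < k" using that \<open>m \<ge> 1\<close> by (cases k) auto
      then have "k < l * k" using l2 by (intro n_less_m_mult_n) auto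
      then show "k < n" using \<open>m < n\<close> that by linarith
    qed
    show ?thesis
    proof (cases "l = p")
      case True
      obtain lam where lam: "cmod lam \<le> real p" "\<And>n. a (p * n) = lam * a n" using U by blast
      have "cmod (a n) = cmod lam * cmod (a m)" using lam(2) m True by (simp add: norm_mult)
      also have "\<dots> \<le> real l * (real m)\<^sup>2" using lam(1) IHm True by (intro mult_mono) auto
      also have "\<dots> \<le> (real l)\<^sup>2 * (real m)\<^sup>2"
      proof (rule mult_right_mono)
        show "real l \<le> (real l)\<^sup>2" using power_bounds_ge_two(1)[OF l2] by linarith
      qed simp
      finally show ?thesis using m by (simp add: power_mult_distrib)
    next
      case False
      then obtain lam where "cmod lam \<le> real l + 1"
          "a (l * m) + (if l dvd m then of_nat l * a (m div l) else 0) = lam * a m"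
        using T[OF l(1)] by blast
      then show ?thesis using norm_hecke_recursion_le_square[OF l2 _ _ IHm IHk] m by blast
    qed
  qed (use a0 a1 in simp_all)
qed

locale normalized_eigenform = cusp_form p f for p f +
  assumes prime_level: "prime p" and eigenform: "hecke_eigenform p f" and fcoeff_1: "fcoeff f 1 = 1"
begin

lemma hecke_T_eigenvalue:
  assumes l: "prime l" "l \<noteq> p"
  shows "\<exists>lam. cmod lam \<le> real l + 1 \<and>
    (\<forall>n. fcoeff f (l * n) + (if l dvd n then of_nat l * fcoeff f (n div l) else 0) = lam * fcoeff f n)"
proof -
  have "\<not> l dvd p" using l primes_dvd_imp_eq prime_level by blast
  obtain lam where "\<forall>n. hecke_coeff p l (fcoeff f) n = lam * fcoeff f n"
    using eigenform l(1) unfolding hecke_eigenform_def by blast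
  then have lam: "fcoeff f (l * n) + (if l dvd n then of_nat l * fcoeff f (n div l) else 0)
      = lam * fcoeff f n" for n
    using \<open>\<not> l dvd p\<close> unfolding hecke_coeff_def by simp
  have rel: "cmod lam * cmod (fcoeff f n) \<le>
      cmod (fcoeff f (l * n)) + (if l dvd n then real l * cmod (fcoeff f (n div l)) else 0)" for n
  proof -
    have "cmod lam * cmod (fcoeff f n) \<le> cmod (fcoeff f (l * n)) +
        cmod (if l dvd n then of_nat l * fcoeff f (n div l) else 0)"
      using norm_triangle_ineq unfolding lam[of n, symmetric] norm_mult[symmetric] by blast
    then show ?thesis by (cases "l dvd n") (simp_all add: norm_mult)
  qed
  obtain C where C: "\<And>n. cmod (fcoeff f n) \<le> C * real n"
    using norm_fcoeff_le_linear by blast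
  have "cmod lam \<le> real l + real l / real l"
    using hecke_eigenvalue_bound[OF C prime_ge_1_nat[OF l(1)] _ _ rel] fcoeff_1 by simp
  then show ?thesis using lam prime_gt_0_nat[OF l(1)] by auto
qed

lemma hecke_U_eigenvalue: "\<exists>lam. cmod lam \<le> real p \<and> (\<forall>n. fcoeff f (p * n) = lam * fcoeff f n)"
proof -
  obtain lam where "\<forall>n. hecke_coeff p p (fcoeff f) n = lam * fcoeff f n"
    using eigenform prime_level unfolding hecke_eigenform_def by blast
  then have lam: "fcoeff f (p * n) = lam * fcoeff f n" for n
    unfolding hecke_coeff_def by simp
  obtain C where C: "\<And>n. cmod (fcoeff f n) \<le> C * real n" using norm_fcoeff_le_linear by blast
  have rel: "cmod lam * cmod (fcoeff f n) \<le> cmod (fcoeff f (p * n))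
      + (if p dvd n then 0 * cmod (fcoeff f (n div p)) else 0)" for n
    by (simp add: lam norm_mult)
  have "cmod lam \<le> real p + 0 / real p"
    using hecke_eigenvalue_bound[OF C _ _ _ rel] level_pos fcoeff_1 by simp
  then show ?thesis using lam by auto
qed

lemma norm_fcoeff_le_square: "cmod (fcoeff f n) \<le> (real n)\<^sup>2"
  using fcoeff_0 fcoeff_1 hecke_T_eigenvalue hecke_U_eigenvalue
  by (rule norm_le_square_if_hecke_recursion)

end

section \<open>Weight-2 cusp forms of level one vanish\<close>

lemma translate_int_invariant:
  assumes T: "\<And>\<tau>. Im \<tau> > 0 \<Longrightarrow> F (\<tau> + 1) = F \<tau>" and "Im \<tau> > 0"
  shows "F (\<tau> + of_int n) = F \<tau>"
proof (induction n rule: int_induct[where k = 0])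
  case (step1 i)
  then show ?case using T[of "\<tau> + of_int i"] assms(2) by (simp add: add.assoc)
next
  case (step2 i)
  then show ?case using T[of "\<tau> + of_int (i - 1)"] assms(2) by (simp add: algebra_simps)
qed simp

lemma modular_orbit_invariant:
  assumes T: "\<And>\<tau>. Im \<tau> > 0 \<Longrightarrow> F (\<tau> + 1) = F \<tau>"
    and S: "\<And>\<tau>. Im \<tau> > 0 \<Longrightarrow> F (-1 / \<tau>) = F \<tau>"
    and z: "Im z > 0" and "w \<in> modular_orbit z"
  shows "F w = F z"
  using \<open>w \<in> modular_orbit z\<close>
proof induction
  case (translate w k)
  then show ?case using translate_int_invariant[of F, OF T] modular_orbit_Im_pos[OF z] by simp
next
  case (invert w)
  then show ?case using S modular_orbit_Im_pos[OF z] by simp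
qed simp

lemma compact_truncated_strip: "compact {z. \<bar>Re z\<bar> \<le> 1/2 \<and> 4/5 \<le> Im z \<and> Im z \<le> Y}"
proof (rule compact_eq_bounded_closed[THEN iffD2], rule conjI)
  show "closed {z. \<bar>Re z\<bar> \<le> 1/2 \<and> 4/5 \<le> Im z \<and> Im z \<le> Y}"
    by (intro closed_Collect_conj closed_Collect_le continuous_intros)
  have "{z. \<bar>Re z\<bar> \<le> 1/2 \<and> 4/5 \<le> Im z \<and> Im z \<le> Y} \<subseteq> cball 0 (1/2 + \<bar>Y\<bar>)"
  proof
    fix z assume "z \<in> {z. \<bar>Re z\<bar> \<le> 1/2 \<and> 4/5 \<le> Im z \<and> Im z \<le> Y}"
    then have "\<bar>Re z\<bar> \<le> 1/2" "\<bar>Im z\<bar> \<le> \<bar>Y\<bar>" by auto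
    then show "z \<in> cball 0 (1/2 + \<bar>Y\<bar>)" using cmod_le[of z] by simp
  qed
  then show "bounded {z. \<bar>Re z\<bar> \<le> 1/2 \<and> 4/5 \<le> Im z \<and> Im z \<le> Y}"
    using bounded_cball bounded_subset by blast
qed

text \<open>Maximum modulus: every value of an invariant function is taken on the closure of the
  fundamental domain, and the truncation above height Y is compact.\<close>
lemma modular_invariant_vanishing_at_cusp_eq_0:
  assumes hol: "\<Phi> holomorphic_on {z. Im z > 0}"
    and inv: "\<And>z w. Im z > 0 \<Longrightarrow> w \<in> modular_orbit z \<Longrightarrow> \<Phi> w = \<Phi> z"
    and cusp: "\<And>e. e > 0 \<Longrightarrow> \<exists>Y. \<forall>z. Im z \<ge> Y \<longrightarrow> cmod (\<Phi> z) < e"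
    and z0: "Im z0 > 0"
  shows "\<Phi> z0 = 0"
proof (rule ccontr)
  assume "\<Phi> z0 \<noteq> 0"
  define H where "H = {z::complex. Im z > 0}"
  have H: "open H" "connected H" unfolding H_def
    using open_halfspace_Im_gt convex_halfspace_Im_gt convex_connected by auto
  obtain Y0 where Y0: "\<And>z. Im z \<ge> Y0 \<Longrightarrow> cmod (\<Phi> z) < cmod (\<Phi> z0)"
    using cusp[of "cmod (\<Phi> z0)"] \<open>\<Phi> z0 \<noteq> 0\<close> by auto
  define Y where "Y = max Y0 1"
  define R where "R = {z. \<bar>Re z\<bar> \<le> 1/2 \<and> 4/5 \<le> Im z \<and> Im z \<le> Y}"
  have "R \<subseteq> H" unfolding R_def H_def by auto
  have reduce: "\<exists>w. \<Phi> w = \<Phi> z \<and> (w \<in> R \<or> cmod (\<Phi> w) < cmod (\<Phi> z0))" if "z \<in> H" for z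
  proof -
    have z: "Im z > 0" using \<open>z \<in> H\<close> unfolding H_def by simp
    then obtain w where w: "w \<in> modular_orbit z" "\<bar>Re w\<bar> \<le> 1/2" "Im w \<ge> 4/5"
      by (rule modular_orbit_reduce)
    have "w \<in> R \<or> cmod (\<Phi> w) < cmod (\<Phi> z0)"
      using Y0[of w] w(2,3) unfolding R_def Y_def by force
    then show ?thesis using inv[OF z w(1)] by auto
  qed
  obtain w0 where "\<Phi> w0 = \<Phi> z0" "w0 \<in> R" using reduce[of z0] z0 unfolding H_def by auto
  moreover have "continuous_on R (\<lambda>z. cmod (\<Phi> z))"
    using holomorphic_on_imp_continuous_on[OF hol] \<open>R \<subseteq> H\<close> unfolding H_def
    by (intro continuous_intros) (auto intro: continuous_on_subset)
  ultimately obtain \<xi> where \<xi>: "\<xi> \<in> R" "\<And>y. y \<in> R \<Longrightarrow> cmod (\<Phi> y) \<le> cmod (\<Phi> \<xi>)"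
    using continuous_attains_sup[OF compact_truncated_strip[of Y]] unfolding R_def by blast
  have max: "cmod (\<Phi> z0) \<le> cmod (\<Phi> \<xi>)" using \<xi>(2) \<open>w0 \<in> R\<close> \<open>\<Phi> w0 = \<Phi> z0\<close> by force
  have "\<Phi> constant_on H"
  proof (rule maximum_modulus_principle[OF _ H H(1) order_refl])
    show "\<Phi> holomorphic_on H" using hol unfolding H_def .
    show "\<xi> \<in> H" using \<xi>(1) \<open>R \<subseteq> H\<close> by blast
    show "cmod (\<Phi> z) \<le> cmod (\<Phi> \<xi>)" if "z \<in> H" for z
      using reduce[OF that] \<xi>(2) max by force
  qed
  then obtain c where c: "\<And>z. z \<in> H \<Longrightarrow> \<Phi> z = c" unfolding constant_on_def by blast
  have "cmod (\<Phi> (of_real Y * \<i>)) < cmod (\<Phi> z0)" using Y0 unfolding Y_def by simp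
  moreover have "of_real Y * \<i> \<in> H" "z0 \<in> H" using z0 unfolding H_def Y_def by auto
  ultimately show False using c by simp
qed

lemma continuous_at_0_e2pi_div:
  assumes "isCont K 0" "N > 0" "e > 0"
  obtains Y where "\<And>z. Im z \<ge> Y \<Longrightarrow> cmod (K (e2pi (z / of_nat N)) - K 0) < e"
proof -
  obtain d where d: "d > 0" "\<And>x. cmod x < d \<Longrightarrow> cmod (K x - K 0) < e"
    using assms(1,3) unfolding continuous_at_eps_delta dist_norm by fastforce
  define Y where "Y = real N * (\<bar>ln d\<bar> + 1) / (2 * pi)"
  have "cmod (K (e2pi (z / of_nat N)) - K 0) < e" if "Im z \<ge> Y" for z
  proof (rule d(2))
    have "2 * pi * Im z / real N \<ge> 2 * pi * Y / real N"
      using that assms(2) by (intro divide_right_mono mult_left_mono) auto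
    then have "2 * pi * Im z / real N \<ge> \<bar>ln d\<bar> + 1" using assms(2) unfolding Y_def by simp
    then have "cmod (e2pi (z / of_nat N)) \<le> exp (- (\<bar>ln d\<bar> + 1))"
      by (simp add: norm_e2pi)
    also have "\<dots> < exp (ln d)" by simp
    finally show "cmod (e2pi (z / of_nat N)) < d" using d(1) by simp
  qed
  then show ?thesis using that by blast
qed

text \<open>With q = e2pi (tau/N) and K a primitive of k(q)/q, the function
  N/(2 pi i) (K(q) - K(0)) has derivative k(q) = g(tau).\<close>
lemma primitive_of_cusp_expansion:
  assumes N: "N > 0" and kh: "k holomorphic_on ball 0 1" and k0: "k 0 = 0"
    and g: "\<And>\<tau>. Im \<tau> > 0 \<Longrightarrow> g \<tau> = k (e2pi (\<tau> / of_nat N))"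
  obtains \<Phi> where "\<And>\<tau>. Im \<tau> > 0 \<Longrightarrow> (\<Phi> has_field_derivative g \<tau>) (at \<tau>)"
    and "\<And>\<tau>. Im \<tau> > 0 \<Longrightarrow> \<Phi> (\<tau> + of_nat N) = \<Phi> \<tau>"
    and "\<And>e. e > 0 \<Longrightarrow> \<exists>Y. \<forall>z. Im z \<ge> Y \<longrightarrow> cmod (\<Phi> z) < e"
proof -
  define k1 where "k1 w = (if w = 0 then deriv k 0 else k w / w)" for w
  have "(\<lambda>z. if z = 0 then deriv k 0 else (k z - k 0) / (z - 0)) holomorphic_on ball 0 1"
    by (rule pole_lemma[OF kh]) (simp add: interior_open)
  moreover have "(\<lambda>z. if z = 0 then deriv k 0 else (k z - k 0) / (z - 0)) = k1"
    unfolding k1_def using k0 by auto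
  ultimately have "k1 holomorphic_on ball 0 1" by simp
  then obtain K where K: "\<And>x. x \<in> ball 0 1 \<Longrightarrow> (K has_field_derivative k1 x) (at x)"
    using holomorphic_convex_primitive'[OF convex_ball open_ball] at_within_open[OF _ open_ball]
    by metis
  define c where "c = of_nat N / (2 * of_real pi * \<i>)"
  define \<Phi> where "\<Phi> \<tau> = c * (K (e2pi (\<tau> / of_nat N)) - K 0)" for \<tau>
  have "(\<Phi> has_field_derivative g \<tau>) (at \<tau>)" if "Im \<tau> > 0" for \<tau>
  proof -
    define w where "w = e2pi (\<tau> / of_nat N)"
    have "w \<in> ball 0 1" unfolding w_def using that N by (simp add: norm_e2pi)
    have "((\<lambda>\<tau>. e2pi (\<tau> / of_nat N)) has_field_derivative (2 * of_real pi * \<i> / of_nat N) * w) (at \<tau>)"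
      unfolding w_def e2pi_def using N by (auto intro!: derivative_eq_intros simp: field_simps)
    from DERIV_chain2[OF K[OF \<open>w \<in> ball 0 1\<close>[unfolded w_def]] this]
    have "(\<Phi> has_field_derivative c * (k1 w * ((2 * of_real pi * \<i> / of_nat N) * w))) (at \<tau>)"
      unfolding \<Phi>_def w_def by (auto intro!: derivative_eq_intros)
    moreover have "c * (k1 w * ((2 * of_real pi * \<i> / of_nat N) * w)) = g \<tau>"
      unfolding c_def k1_def w_def using N g[OF that] by (simp add: field_simps)
    ultimately show ?thesis by simp
  qed
  moreover have "\<Phi> (\<tau> + of_nat N) = \<Phi> \<tau>" for \<tau>
    unfolding \<Phi>_def using N by (simp add: add_divide_distrib e2pi_add)
  moreover have "\<exists>Y. \<forall>z. Im z \<ge> Y \<longrightarrow> cmod (\<Phi> z) < e" if "e > 0" for e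
  proof -
    have "cmod c > 0" using N by (simp add: c_def)
    moreover have "isCont K 0" using K[of 0] DERIV_isCont by simp
    ultimately obtain Y where "\<And>z. Im z \<ge> Y \<Longrightarrow> cmod (K (e2pi (z / of_nat N)) - K 0) < e / cmod c"
      using continuous_at_0_e2pi_div N \<open>e > 0\<close> by (metis divide_pos_pos)
    then show ?thesis
      using \<open>cmod c > 0\<close> unfolding \<Phi>_def norm_mult by (metis mult.commute pos_less_divide_eq)
  qed
  ultimately show ?thesis using that by blast
qed

lemma primitive_diff_constant:
  assumes \<Phi>: "\<And>\<tau>. Im \<tau> > 0 \<Longrightarrow> (\<Phi> has_field_derivative g \<tau>) (at \<tau>)"
    and h: "\<And>\<tau>. Im \<tau> > 0 \<Longrightarrow> Im (h \<tau>) > 0"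
      "\<And>\<tau>. Im \<tau> > 0 \<Longrightarrow> (h has_field_derivative h' \<tau>) (at \<tau>)"
    and g: "\<And>\<tau>. Im \<tau> > 0 \<Longrightarrow> g (h \<tau>) * h' \<tau> = g \<tau>"
  obtains c where "\<And>\<tau>. Im \<tau> > 0 \<Longrightarrow> \<Phi> (h \<tau>) - \<Phi> \<tau> = c"
proof -
  have "\<exists>c. \<forall>\<tau>\<in>{z. 0 < Im z}. \<Phi> (h \<tau>) - \<Phi> \<tau> = c"
  proof (rule has_field_derivative_zero_constant[OF convex_halfspace_Im_gt])
    fix \<tau> :: complex assume "\<tau> \<in> {z. 0 < Im z}"
    then have \<tau>: "Im \<tau> > 0" by simp
    have "((\<lambda>\<tau>. \<Phi> (h \<tau>) - \<Phi> \<tau>) has_field_derivative g (h \<tau>) * h' \<tau> - g \<tau>) (at \<tau>)"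
      by (intro DERIV_diff DERIV_chain2[OF \<Phi>[OF h(1)[OF \<tau>]] h(2)[OF \<tau>]] \<Phi>[OF \<tau>])
    then show "((\<lambda>\<tau>. \<Phi> (h \<tau>) - \<Phi> \<tau>) has_field_derivative 0) (at \<tau> within {z. 0 < Im z})"
      using g[OF \<tau>] by (auto intro: has_field_derivative_at_within)
  qed
  then show ?thesis using that by auto
qed

lemma primitive_modular_invariant:
  assumes \<Phi>': "\<And>\<tau>. Im \<tau> > 0 \<Longrightarrow> (\<Phi> has_field_derivative g \<tau>) (at \<tau>)"
    and \<Phi>_N: "\<And>\<tau>. Im \<tau> > 0 \<Longrightarrow> \<Phi> (\<tau> + of_nat N) = \<Phi> \<tau>" and N: "N > 0"
    and T: "\<And>\<tau>. Im \<tau> > 0 \<Longrightarrow> g (\<tau> + 1) = g \<tau>"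
    and S: "\<And>\<tau>. Im \<tau> > 0 \<Longrightarrow> g (-1/\<tau>) = \<tau>\<^sup>2 * g \<tau>"
  shows "\<And>\<tau>. Im \<tau> > 0 \<Longrightarrow> \<Phi> (\<tau> + 1) = \<Phi> \<tau>" and "\<And>\<tau>. Im \<tau> > 0 \<Longrightarrow> \<Phi> (-1/\<tau>) = \<Phi> \<tau>"
proof -
  obtain c1 where c1: "\<And>\<tau>. Im \<tau> > 0 \<Longrightarrow> \<Phi> (\<tau> + 1) - \<Phi> \<tau> = c1"
    by (rule primitive_diff_constant[OF \<Phi>', of "\<lambda>\<tau>. \<tau> + 1" "\<lambda>_. 1"])
       (auto intro!: derivative_eq_intros simp: T)
  have "\<Phi> (\<i> + of_nat n) = \<Phi> \<i> + of_nat n * c1" for n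
  proof (induction n)
    case (Suc n)
    then show ?case using c1[of "\<i> + of_nat n"] by (simp add: algebra_simps)
  qed simp
  then have "c1 = 0" using \<Phi>_N[of \<i>] N by simp
  then show "\<Phi> (\<tau> + 1) = \<Phi> \<tau>" if "Im \<tau> > 0" for \<tau> using c1[OF that] by simp
  have inv: "((\<lambda>\<tau>. -1/\<tau>) has_field_derivative 1/\<tau>\<^sup>2) (at \<tau>)" "g (-1/\<tau>) * (1/\<tau>\<^sup>2) = g \<tau>"
    if "Im \<tau> > 0" for \<tau>
  proof -
    have "\<tau> \<noteq> 0" using that by auto
    then show "((\<lambda>\<tau>. -1/\<tau>) has_field_derivative 1/\<tau>\<^sup>2) (at \<tau>)"
      by (auto intro!: derivative_eq_intros simp: power2_eq_square field_simps)
    show "g (-1/\<tau>) * (1/\<tau>\<^sup>2) = g \<tau>" using S[OF that] \<open>\<tau> \<noteq> 0\<close> by simp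
  qed
  obtain c2 where c2: "\<And>\<tau>. Im \<tau> > 0 \<Longrightarrow> \<Phi> (-1/\<tau>) - \<Phi> \<tau> = c2"
    using primitive_diff_constant[OF \<Phi>' Im_neg_inverse_pos inv] by metis
  have "c2 = 0" using c2[of \<i>] by simp
  then show "\<Phi> (-1/\<tau>) = \<Phi> \<tau>" if "Im \<tau> > 0" for \<tau> using c2[OF that] by simp
qed

text \<open>A primitive of a weight-2 cusp form for SL_2(Z) is an SL_2(Z)-invariant holomorphic
  function vanishing at the cusp.\<close>
lemma weight2_level_one_cusp_form_eq_0:
  fixes g k :: "complex \<Rightarrow> complex" and N :: nat
  assumes N: "N > 0"
    and T: "\<And>\<tau>. Im \<tau> > 0 \<Longrightarrow> g (\<tau> + 1) = g \<tau>"
    and S: "\<And>\<tau>. Im \<tau> > 0 \<Longrightarrow> g (-1/\<tau>) = \<tau>\<^sup>2 * g \<tau>"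
    and k: "k holomorphic_on ball 0 1" "k 0 = 0"
    and g: "\<And>\<tau>. Im \<tau> > 0 \<Longrightarrow> g \<tau> = k (e2pi (\<tau> / of_nat N))"
    and \<tau>: "Im \<tau> > 0"
  shows "g \<tau> = 0"
proof -
  obtain \<Phi> where \<Phi>': "\<And>\<tau>. Im \<tau> > 0 \<Longrightarrow> (\<Phi> has_field_derivative g \<tau>) (at \<tau>)"
    and \<Phi>_N: "\<And>\<tau>. Im \<tau> > 0 \<Longrightarrow> \<Phi> (\<tau> + of_nat N) = \<Phi> \<tau>"
    and \<Phi>_cusp: "\<And>e. e > 0 \<Longrightarrow> \<exists>Y. \<forall>z. Im z \<ge> Y \<longrightarrow> cmod (\<Phi> z) < e"
    using primitive_of_cusp_expansion[OF N k g] by metis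
  note invariant = primitive_modular_invariant[OF \<Phi>' \<Phi>_N N T S]
  have "\<Phi> holomorphic_on {z. Im z > 0}"
    unfolding holomorphic_on_open[OF open_halfspace_Im_gt] using \<Phi>' by blast
  moreover have "\<Phi> w = \<Phi> z" if "Im z > 0" "w \<in> modular_orbit z" for z w
    using modular_orbit_invariant[OF invariant that] .
  ultimately have \<Phi>_0: "\<Phi> z = 0" if "Im z > 0" for z
    using modular_invariant_vanishing_at_cusp_eq_0 \<Phi>_cusp that by blast
  have "((\<lambda>_. 0) has_field_derivative g \<tau>) (at \<tau>)"
  proof (rule has_field_derivative_transform_within_open[OF \<Phi>'[OF \<tau>] open_halfspace_Im_gt])
    show "\<tau> \<in> {z. 0 < Im z}" using \<tau> by simp
    show "\<Phi> z = 0" if "z \<in> {z. 0 < Im z}" for z using \<Phi>_0 that by simp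
  qed
  then show ?thesis using DERIV_const DERIV_unique by blast
qed

section \<open>The trace from Gamma_0(p) to SL_2(Z)\<close>

lemma ex1_neg_inverse_mod_prime:
  fixes p j :: nat
  assumes p: "prime p" and j: "0 < j" "j < p"
  shows "\<exists>!k. 0 < k \<and> k < p \<and> p dvd j * k + 1"
proof -
  have p0: "p > 0" using prime_gt_0_nat[OF p] .
  have "[x = p - 1] (mod p) \<longleftrightarrow> p dvd x + 1" for x
  proof -
    have "[x = p - 1] (mod p) \<longleftrightarrow> [x + 1 = p - 1 + 1] (mod p)" by (simp only: cong_add_rcancel_nat)
    also have "\<dots> \<longleftrightarrow> [x + 1 = 0] (mod p)" using p0 by (simp add: cong_def)
    finally show ?thesis by (simp add: cong_0_iff)
  qed
  then show ?thesis
    using cong_solve_unique_nontrivial[OF p _ j, of "p - 1"] coprime_diff_one_right_nat[OF p0]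
    by simp
qed

definition neg_inverse_mod :: "nat \<Rightarrow> nat \<Rightarrow> nat" where
  "neg_inverse_mod p j = (THE k. 0 < k \<and> k < p \<and> p dvd j * k + 1)"

lemma neg_inverse_mod:
  assumes "prime p" "0 < j" "j < p"
  shows "0 < neg_inverse_mod p j" "neg_inverse_mod p j < p" "p dvd j * neg_inverse_mod p j + 1"
  using theI'[OF ex1_neg_inverse_mod_prime[OF assms]] unfolding neg_inverse_mod_def by auto

lemma neg_inverse_mod_involution:
  assumes "prime p" "0 < j" "j < p"
  shows "neg_inverse_mod p (neg_inverse_mod p j) = j"
  unfolding neg_inverse_mod_def[of p "neg_inverse_mod p j"]
  using neg_inverse_mod[OF assms] assms
  by (intro the1_equality[OF ex1_neg_inverse_mod_prime]) (auto simp: mult.commute)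

lemma sum_neg_inverse_mod_reindex:
  assumes "prime p"
  shows "(\<Sum>j\<in>{1..<p}. h (neg_inverse_mod p j)) = (\<Sum>j\<in>{1..<p}. h j)"
  by (rule sum.reindex_bij_witness[where i = "neg_inverse_mod p" and j = "neg_inverse_mod p"])
     (use neg_inverse_mod[OF assms] neg_inverse_mod_involution[OF assms] in \<open>auto simp: Suc_le_eq\<close>)

lemma sum_roots_of_unity_power:
  assumes "p > 0"
  shows "(\<Sum>j<p. e2pi (of_nat n / of_nat p) ^ j) = (if p dvd n then of_nat p else 0)"
proof (cases "p dvd n")
  case True
  then obtain m where "n = p * m" by blast
  then have "e2pi (of_nat n / of_nat p) = 1" using assms by simp
  then show ?thesis using True by simp
next
  case False
  define z where "z = e2pi (of_nat n / of_nat p)"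
  have "z \<noteq> 1"
  proof
    assume "z = 1"
    then have "e2pi (of_nat n / of_nat p) = e2pi 0" unfolding z_def by (simp add: e2pi_def)
    then obtain k :: int where "of_nat n / of_nat p = (0::complex) + of_int k" by (rule e2pi_eqD)
    then have "int n = int p * k" using assms by (simp add: field_simps) (metis of_int_eq_iff of_int_mult of_int_of_nat_eq)
    then show False using False by (metis dvd_triv_left int_dvd_int_iff)
  qed
  moreover have "z ^ p = 1"
    using e2pi_of_nat_mult[of p "of_nat n / of_nat p"] assms unfolding z_def
    by simp
  ultimately show ?thesis using False unfolding z_def[symmetric] by (simp add: sum_gp_strict)
qed

lemma sums_roots_of_unity_filter:
  assumes B: "B holomorphic_on ball 0 1" and p: "p > 0" and w: "cmod w < 1"
  shows "(\<lambda>m. of_nat p * ((deriv ^^ (p * m)) B 0 / fact (p * m)) * w ^ (p * m)) sums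
         (\<Sum>j<p. B (e2pi (of_nat j / of_nat p) * w))"
proof -
  define \<beta> where "\<beta> n = (deriv ^^ n) B 0 / fact n" for n
  have "(\<lambda>n. \<beta> n * (e2pi (of_nat j / of_nat p) * w) ^ n) sums B (e2pi (of_nat j / of_nat p) * w)" for j
    using holomorphic_power_series[OF B, of "e2pi (of_nat j / of_nat p) * w"] w
    unfolding \<beta>_def by (simp add: norm_mult norm_e2pi)
  then have "(\<lambda>n. \<Sum>j<p. \<beta> n * (e2pi (of_nat j / of_nat p) * w) ^ n) sums
      (\<Sum>j<p. B (e2pi (of_nat j / of_nat p) * w))"
    by (rule sums_sum)
  moreover have "(\<Sum>j<p. \<beta> n * (e2pi (of_nat j / of_nat p) * w) ^ n) =
      (if p dvd n then of_nat p * \<beta> n * w ^ n else 0)" for n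
  proof -
    have "e2pi (of_nat j / of_nat p) ^ n = e2pi (of_nat n / of_nat p) ^ j" for j
      using e2pi_of_nat_mult[of n "of_nat j / of_nat p"] e2pi_of_nat_mult[of j "of_nat n / of_nat p"]
      by (simp add: mult.commute)
    then have "(\<Sum>j<p. \<beta> n * (e2pi (of_nat j / of_nat p) * w) ^ n) =
        \<beta> n * w ^ n * (\<Sum>j<p. e2pi (of_nat n / of_nat p) ^ j)"
      by (simp add: sum_distrib_left power_mult_distrib algebra_simps)
    then show ?thesis using sum_roots_of_unity_power[OF p, of n] by simp
  qed
  ultimately have s: "(\<lambda>n. if p dvd n then of_nat p * \<beta> n * w ^ n else 0) sums
      (\<Sum>j<p. B (e2pi (of_nat j / of_nat p) * w))"
    by simp
  have sm: "strict_mono (\<lambda>m. p * m)" using p by (simp add: strict_mono_def)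
  have zero: "(if p dvd n then of_nat p * \<beta> n * w ^ n else 0) = 0"
    if "n \<notin> range (\<lambda>m. p * m)" for n
    using that by (auto elim!: dvdE)
  have "(\<lambda>m. (\<lambda>n. if p dvd n then of_nat p * \<beta> n * w ^ n else 0) (p * m)) sums
      (\<Sum>j<p. B (e2pi (of_nat j / of_nat p) * w))"
    using s by (subst sums_mono_reindex[OF sm]) (rule zero)
  then show ?thesis unfolding \<beta>_def by simp
qed

lemma power_series_coeff_eq_0_if_sums_0:
  fixes c :: "nat \<Rightarrow> complex"
  assumes p: "p > 0" and s: "\<And>w. w \<in> ball 0 1 \<Longrightarrow> (\<lambda>m. c m * w ^ (p * m)) sums 0"
  shows "c m = 0"
proof -
  define C where "C = Abs_fps (\<lambda>n. if p dvd n then c (n div p) else 0)"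
  have sm: "strict_mono (\<lambda>m. p * m)" using p by (simp add: strict_mono_def)
  have "(\<lambda>n. fps_nth C n * w ^ n) sums 0" if "w \<in> ball 0 1" for w
  proof -
    have "(\<lambda>m. fps_nth C (p * m) * w ^ (p * m)) sums 0"
      using s[OF that] p unfolding C_def by simp
    moreover have zero: "fps_nth C n * w ^ n = 0" if "n \<notin> range (\<lambda>m. p * m)" for n
      using that by (auto simp: C_def)
    ultimately show ?thesis by (subst (asm) sums_mono_reindex[OF sm]) (rule zero)
  qed
  then have "(\<lambda>w. 0::complex) has_fps_expansion C"
    by (intro has_fps_expansionI) (auto intro: eventually_mono[OF eventually_nhds_in_open[of "ball 0 1"]])
  then have "fps_nth C (p * m) = (deriv ^^ (p * m)) (\<lambda>w. 0) 0 / fact (p * m)"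
    by (rule fps_nth_fps_expansion)
  then show ?thesis unfolding C_def using p by simp
qed

text \<open>A is the expansion of u at the cusp infinity (width 1) and B the one at the cusp 0
  (width p). The trace u + sum_j (u|S)(tau + j) of u to SL_2(Z) is a level-one cusp form, hence
  zero, and comparing expansions relates the coefficients of A and B.\<close>
locale gamma0_trace =
  fixes p :: nat and u A B :: "complex \<Rightarrow> complex"
  assumes prime: "prime p"
    and invariant: "\<And>a b c d \<tau>. a * d - b * c = 1 \<Longrightarrow> int p dvd c \<Longrightarrow> Im \<tau> > 0 \<Longrightarrow>
      slash2 u a b c d \<tau> = u \<tau>"
    and A_holomorphic: "A holomorphic_on ball 0 1" and A_0: "A 0 = 0"
    and A_e2pi: "\<And>\<tau>. Im \<tau> > 0 \<Longrightarrow> u \<tau> = A (e2pi \<tau>)"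
    and B_holomorphic: "B holomorphic_on ball 0 1" and B_0: "B 0 = 0"
    and B_e2pi: "\<And>\<tau>. Im \<tau> > 0 \<Longrightarrow> u (-1/\<tau>) / \<tau>\<^sup>2 = B (e2pi (\<tau> / of_nat p)) / of_nat p"
begin

definition uS :: "complex \<Rightarrow> complex" where
  "uS \<tau> = u (-1/\<tau>) / \<tau>\<^sup>2"

definition trace :: "complex \<Rightarrow> complex" where
  "trace \<tau> = u \<tau> + (\<Sum>j<p. uS (\<tau> + of_nat j))"

definition trace_qexp :: "complex \<Rightarrow> complex" where
  "trace_qexp w = A (w ^ p) + (\<Sum>j<p. B (e2pi (of_nat j / of_nat p) * w)) / of_nat p"

lemma p_pos: "p > 0"
  using prime prime_gt_0_nat by blast

lemma uS_e2pi: "Im \<tau> > 0 \<Longrightarrow> uS \<tau> = B (e2pi (\<tau> / of_nat p)) / of_nat p"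
  unfolding uS_def by (rule B_e2pi)

lemma trace_e2pi: "Im \<tau> > 0 \<Longrightarrow> trace \<tau> = trace_qexp (e2pi (\<tau> / of_nat p))"
proof -
  assume \<tau>: "Im \<tau> > 0"
  have "e2pi \<tau> = e2pi (\<tau> / of_nat p) ^ p"
    using e2pi_of_nat_mult[of p "\<tau> / of_nat p"] p_pos by simp
  moreover have "uS (\<tau> + of_nat j) = B (e2pi (of_nat j / of_nat p) * e2pi (\<tau> / of_nat p)) / of_nat p" for j
    using uS_e2pi[of "\<tau> + of_nat j"] \<tau> by (simp add: add_divide_distrib e2pi_add mult.commute)
  ultimately show ?thesis
    unfolding trace_def trace_qexp_def using A_e2pi[OF \<tau>] by (simp add: sum_divide_distrib)
qed

lemma holomorphic_trace_qexp: "trace_qexp holomorphic_on ball 0 1"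
proof -
  have subA: "(\<lambda>w. w ^ p) ` ball 0 1 \<subseteq> ball (0::complex) 1"
    using p_pos by (intro image_subsetI) (simp add: mem_ball_0 norm_power power_less_one_iff)
  have subB: "(\<lambda>w. e2pi (of_nat j / of_nat p) * w) ` ball 0 1 \<subseteq> ball 0 1" for j
    by (auto simp: norm_mult norm_e2pi)
  have "(A \<circ> (\<lambda>w. w ^ p)) holomorphic_on ball 0 1"
    by (rule holomorphic_on_compose_gen[OF _ A_holomorphic subA]) (intro holomorphic_intros)
  moreover have "(B \<circ> (\<lambda>w. e2pi (of_nat j / of_nat p) * w)) holomorphic_on ball 0 1" for j
    by (rule holomorphic_on_compose_gen[OF _ B_holomorphic subB]) (intro holomorphic_intros)
  ultimately have "(\<lambda>w. A (w ^ p)) holomorphic_on ball 0 1"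
    "(\<lambda>w. B (e2pi (of_nat j / of_nat p) * w)) holomorphic_on ball 0 1" for j
    by (simp_all add: o_def)
  then show ?thesis
    unfolding trace_qexp_def by (intro holomorphic_intros holomorphic_on_sum) auto
qed

lemma trace_qexp_0: "trace_qexp 0 = 0"
  using A_0 B_0 p_pos by (simp add: trace_qexp_def zero_power)

lemma trace_translate: "Im \<tau> > 0 \<Longrightarrow> trace (\<tau> + 1) = trace \<tau>"
proof -
  assume \<tau>: "Im \<tau> > 0"
  have "u (\<tau> + 1) = u \<tau>" using A_e2pi[OF \<tau>] A_e2pi[of "\<tau> + 1"] \<tau> by (simp add: e2pi_add)
  moreover have "uS (\<tau> + of_nat p) = uS \<tau>"
    using uS_e2pi[OF \<tau>] uS_e2pi[of "\<tau> + of_nat p"] \<tau> p_pos by (simp add: add_divide_distrib e2pi_add)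
  then have "(\<Sum>j<p. uS (\<tau> + 1 + of_nat j)) = (\<Sum>j<p. uS (\<tau> + of_nat j))"
    using sum.lessThan_Suc_shift[of "\<lambda>j. uS (\<tau> + of_nat j)" p] sum.lessThan_Suc[of "\<lambda>j. uS (\<tau> + of_nat j)" p]
    by (simp add: algebra_simps)
  ultimately show ?thesis unfolding trace_def by simp
qed

text \<open>For 0 < j < p, with k = neg_inverse_mod p j the matrix (-k, -1; jk + 1, j) lies in
  Gamma_0(p) and maps -1/(tau + k) to -1/(-1/tau + j): the cosets S T^j are permuted by S.\<close>
lemma uS_invert_translate:
  assumes \<tau>: "Im \<tau> > 0" and j: "0 < j" "j < p"
  shows "uS (-1/\<tau> + of_nat j) = \<tau>\<^sup>2 * uS (\<tau> + of_nat (neg_inverse_mod p j))"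
proof -
  define k where "k = neg_inverse_mod p j"
  have dvd: "int p dvd int j * int k + 1"
    using neg_inverse_mod(3)[OF prime j] unfolding k_def by (metis of_nat_1 of_nat_add of_nat_dvd_iff of_nat_mult)
  define J where "J = (of_nat j :: complex)"
  define K where "K = (of_nat k :: complex)"
  have "\<tau> \<noteq> 0" "\<tau> + K \<noteq> 0" using \<tau> unfolding K_def by (auto simp: complex_eq_iff)
  have "J * \<tau> - 1 \<noteq> 0" using \<tau> j unfolding J_def by (auto simp: complex_eq_iff)
  define \<sigma> where "\<sigma> = -1 / (\<tau> + K)"
  have \<sigma>: "Im \<sigma> > 0"
    unfolding \<sigma>_def by (rule Im_neg_inverse_pos) (use \<tau> in \<open>simp add: K_def\<close>)
  have det: "(- int k) * int j - (-1) * (int j * int k + 1) = 1" by (simp add: algebra_simps)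
  have num: "of_int (- int k) * \<sigma> + of_int (-1) = -\<tau> / (\<tau> + K)"
    and den: "of_int (int j * int k + 1) * \<sigma> + of_int (int j) = (J * \<tau> - 1) / (\<tau> + K)"
    unfolding \<sigma>_def J_def K_def using \<open>\<tau> + K \<noteq> 0\<close> unfolding K_def by (simp_all add: field_simps)
  have "u (-\<tau> / (J * \<tau> - 1)) / ((J * \<tau> - 1) / (\<tau> + K))\<^sup>2 = u \<sigma>"
    using invariant[OF det dvd \<sigma>] \<open>\<tau> + K \<noteq> 0\<close>
    unfolding slash2_moebius_int moebius_int_def num den by simp
  then have "u (-\<tau> / (J * \<tau> - 1)) = u \<sigma> * ((J * \<tau> - 1) / (\<tau> + K))\<^sup>2"
    using \<open>J * \<tau> - 1 \<noteq> 0\<close> \<open>\<tau> + K \<noteq> 0\<close> by (simp add: divide_eq_eq)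
  moreover have "-1 / (-1/\<tau> + J) = -\<tau> / (J * \<tau> - 1)" "-1/\<tau> + J = (J * \<tau> - 1) / \<tau>"
    using \<open>\<tau> \<noteq> 0\<close> \<open>J * \<tau> - 1 \<noteq> 0\<close> by (simp_all add: field_simps)
  ultimately have "uS (-1/\<tau> + J) = u \<sigma> * ((J * \<tau> - 1) / (\<tau> + K))\<^sup>2 / ((J * \<tau> - 1) / \<tau>)\<^sup>2"
    unfolding uS_def by simp
  also have "\<dots> = \<tau>\<^sup>2 * (u \<sigma> / (\<tau> + K)\<^sup>2)"
    using \<open>\<tau> \<noteq> 0\<close> \<open>J * \<tau> - 1 \<noteq> 0\<close> \<open>\<tau> + K \<noteq> 0\<close> by (simp add: power_divide field_simps)
  also have "u \<sigma> / (\<tau> + K)\<^sup>2 = uS (\<tau> + K)" unfolding uS_def \<sigma>_def by simp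
  finally show ?thesis unfolding J_def K_def k_def .
qed

lemma trace_invert: "Im \<tau> > 0 \<Longrightarrow> trace (-1/\<tau>) = \<tau>\<^sup>2 * trace \<tau>"
proof -
  assume \<tau>: "Im \<tau> > 0"
  then have "\<tau> \<noteq> 0" by auto
  have split: "(\<Sum>j<p. h j) = h 0 + (\<Sum>j\<in>{1..<p}. h j)" for h :: "nat \<Rightarrow> complex"
    using p_pos by (subst lessThan_atLeast0) (simp add: sum.atLeast_Suc_lessThan)
  have "trace (-1/\<tau>) = u (-1/\<tau>) + uS (-1/\<tau>) + (\<Sum>j\<in>{1..<p}. uS (-1/\<tau> + of_nat j))"
    unfolding trace_def split by simp
  also have "u (-1/\<tau>) = \<tau>\<^sup>2 * uS \<tau>"
    unfolding uS_def using \<open>\<tau> \<noteq> 0\<close> by simp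
  also have "uS (-1/\<tau>) = \<tau>\<^sup>2 * u \<tau>"
    unfolding uS_def using \<open>\<tau> \<noteq> 0\<close> by (simp add: power2_eq_square)
  also have "(\<Sum>j\<in>{1..<p}. uS (-1/\<tau> + of_nat j)) =
      \<tau>\<^sup>2 * (\<Sum>j\<in>{1..<p}. uS (\<tau> + of_nat (neg_inverse_mod p j)))"
    using uS_invert_translate[OF \<tau>] by (simp add: sum_distrib_left)
  also have "(\<Sum>j\<in>{1..<p}. uS (\<tau> + of_nat (neg_inverse_mod p j))) = (\<Sum>j\<in>{1..<p}. uS (\<tau> + of_nat j))"
    by (rule sum_neg_inverse_mod_reindex[OF prime])
  also have "\<tau>\<^sup>2 * uS \<tau> + \<tau>\<^sup>2 * u \<tau> + \<tau>\<^sup>2 * (\<Sum>j\<in>{1..<p}. uS (\<tau> + of_nat j)) = \<tau>\<^sup>2 * trace \<tau>"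
    unfolding trace_def split by (simp add: algebra_simps)
  finally show ?thesis .
qed

lemma trace_qexp_eq_0: "w \<in> ball 0 1 \<Longrightarrow> trace_qexp w = 0"
proof (cases "w = 0")
  case False
  assume w: "w \<in> ball 0 1"
  define \<sigma> where "\<sigma> = of_nat p * log2pi w"
  have \<sigma>: "Im \<sigma> > 0" unfolding \<sigma>_def using Im_log2pi_pos False w p_pos by simp
  have "e2pi (\<sigma> / of_nat p) = w" unfolding \<sigma>_def using p_pos False by simp
  then have "trace_qexp w = trace \<sigma>" using trace_e2pi[OF \<sigma>] by simp
  also have "trace \<sigma> = 0"
    by (rule weight2_level_one_cusp_form_eq_0[OF p_pos trace_translate trace_invert
          holomorphic_trace_qexp trace_qexp_0 trace_e2pi \<sigma>])
  finally show ?thesis .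
qed (simp add: trace_qexp_0)

lemma coeff_A_eq_neg_coeff_B:
  "(deriv ^^ m) A 0 / fact m = - ((deriv ^^ (p * m)) B 0 / fact (p * m))"
proof -
  define \<alpha> where "\<alpha> n = (deriv ^^ n) A 0 / fact n" for n
  define \<beta> where "\<beta> n = (deriv ^^ n) B 0 / fact n" for n
  have "(\<lambda>m. (\<alpha> m + \<beta> (p * m)) * w ^ (p * m)) sums 0" if w: "w \<in> ball 0 1" for w
  proof -
    have "w ^ p \<in> ball 0 1" using w p_pos by (simp add: norm_power power_less_one_iff)
    then have "(\<lambda>m. \<alpha> m * w ^ (p * m)) sums A (w ^ p)"
      using holomorphic_power_series[OF A_holomorphic] unfolding \<alpha>_def by (simp add: power_mult)
    moreover have "(\<lambda>m. \<beta> (p * m) * w ^ (p * m)) sums ((\<Sum>j<p. B (e2pi (of_nat j / of_nat p) * w)) / of_nat p)"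
      using sums_divide[OF sums_roots_of_unity_filter[OF B_holomorphic p_pos, of w], of "of_nat p"] w p_pos
      unfolding \<beta>_def by simp
    ultimately have "(\<lambda>m. \<alpha> m * w ^ (p * m) + \<beta> (p * m) * w ^ (p * m)) sums trace_qexp w"
      unfolding trace_qexp_def by (rule sums_add)
    then show ?thesis using trace_qexp_eq_0[OF w] by (simp add: distrib_right)
  qed
  then have "\<alpha> m + \<beta> (p * m) = 0" by (rule power_series_coeff_eq_0_if_sums_0[OF p_pos])
  then show ?thesis unfolding \<alpha>_def \<beta>_def by (rule add_eq_0_iff2[THEN iffD1])
qed

end

text \<open>The matrix (-d, c'; b N, -a) is the conjugate of (a, b; N c', d) by the Fricke involution
  tau \<mapsto> -1/(N tau).\<close>
lemma moebius_int_conj_fricke: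
  assumes det: "a * d - b * c = 1" and c: "c = int N * c'" and \<sigma>: "Im \<sigma> > 0" and N: "N > 0"
  defines "\<tau> \<equiv> -1 / (of_nat N * \<sigma>)"
  shows "of_int (b * int N) * \<tau> + of_int (- a) = - (of_int a * \<sigma> + of_int b) / \<sigma>"
    and "moebius_int (- d) c' (b * int N) (- a) \<tau> = -1 / (of_nat N * moebius_int a b c d \<sigma>)"
proof -
  define A where "A = of_int a * \<sigma> + of_int b"
  define C where "C = of_int c * \<sigma> + of_int d"
  have nz: "(of_nat N :: complex) \<noteq> 0" "\<sigma> \<noteq> 0" "A \<noteq> 0" "C \<noteq> 0"
    using N \<sigma> moebius_numer_nonzero[OF det \<sigma>] moebius_denom_nonzero[OF det \<sigma>]
    unfolding A_def C_def by auto
  show den: "of_int (b * int N) * \<tau> + of_int (- a) = - (of_int a * \<sigma> + of_int b) / \<sigma>"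
    unfolding \<tau>_def using nz by (simp add: field_simps)
  have "of_int (- d) * \<tau> + of_int c' = C / (of_nat N * \<sigma>)"
    unfolding \<tau>_def C_def c using nz by (simp add: field_simps)
  then have "moebius_int (- d) c' (b * int N) (- a) \<tau> = (C / (of_nat N * \<sigma>)) / (- A / \<sigma>)"
    unfolding moebius_int_def den A_def by simp
  also have "\<dots> = -1 / (of_nat N * (A / C))" using nz by (simp add: field_simps)
  finally show "moebius_int (- d) c' (b * int N) (- a) \<tau> = -1 / (of_nat N * moebius_int a b c d \<sigma>)"
    unfolding moebius_int_def A_def C_def .
qed

context cusp_form
begin

definition fricke :: "complex \<Rightarrow> complex" where
  "fricke \<sigma> = f (-1 / (of_nat N * \<sigma>)) / (of_nat N * \<sigma>\<^sup>2)"

lemma fricke_slash2_invariant: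
  assumes det: "a * d - b * c = 1" and "int N dvd c" and \<sigma>: "Im \<sigma> > 0"
  shows "slash2 fricke a b c d \<sigma> = fricke \<sigma>"
proof -
  obtain c' where c: "c = int N * c'" using \<open>int N dvd c\<close> by blast
  define \<tau> where "\<tau> = -1 / (of_nat N * \<sigma>)"
  define A where "A = of_int a * \<sigma> + of_int b"
  define C where "C = of_int c * \<sigma> + of_int d"
  have N: "(of_nat N :: complex) \<noteq> 0" "\<sigma> \<noteq> 0" using level_pos \<sigma> by auto
  have "A \<noteq> 0" "C \<noteq> 0"
    unfolding A_def C_def using moebius_numer_nonzero[OF det \<sigma>] moebius_denom_nonzero[OF det \<sigma>] by auto
  have \<tau>: "Im \<tau> > 0" unfolding \<tau>_def by (rule Im_neg_inverse_pos) (use \<sigma> level_pos in simp)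
  have det': "(- d) * (- a) - c' * (b * int N) = 1" using det c by (simp add: algebra_simps)
  note conj = moebius_int_conj_fricke[OF det c \<sigma> level_pos, folded \<tau>_def A_def]
  have "f (-1 / (of_nat N * moebius_int a b c d \<sigma>)) / (- A / \<sigma>)\<^sup>2 = f \<tau>"
    using slash2_invariant[OF det' _ \<tau>] unfolding slash2_moebius_int conj by simp
  then have "f (-1 / (of_nat N * moebius_int a b c d \<sigma>)) = f \<tau> * A\<^sup>2 / \<sigma>\<^sup>2"
    using \<open>A \<noteq> 0\<close> N by (simp add: field_simps)
  moreover have "moebius_int a b c d \<sigma> = A / C" unfolding moebius_int_def A_def C_def ..
  ultimately have "slash2 fricke a b c d \<sigma> = f \<tau> * A\<^sup>2 / \<sigma>\<^sup>2 / (of_nat N * (A / C)\<^sup>2 * C\<^sup>2)"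
    unfolding slash2_moebius_int fricke_def C_def[symmetric] by simp
  also have "\<dots> = fricke \<sigma>"
    unfolding fricke_def \<tau>_def using \<open>A \<noteq> 0\<close> \<open>C \<noteq> 0\<close> N by (simp add: power_divide field_simps)
  finally show ?thesis .
qed

lemma fricke_eq_qexp_zero: "Im \<tau> > 0 \<Longrightarrow> fricke \<tau> = qexp_zero N f (e2pi \<tau>)"
  unfolding fricke_def by (simp add: qexp_zero_e2pi)

lemma fricke_invert:
  assumes "Im \<tau> > 0"
  shows "fricke (-1/\<tau>) / \<tau>\<^sup>2 = qexp_inf f (e2pi (\<tau> / of_nat N)) / of_nat N"
proof -
  have "(of_nat N :: complex) \<noteq> 0" "\<tau> \<noteq> 0" using level_pos assms by auto
  then have "fricke (-1/\<tau>) / \<tau>\<^sup>2 = f (\<tau> / of_nat N) / of_nat N"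
    unfolding fricke_def by (simp add: power_divide field_simps)
  then show ?thesis using qexp_inf_e2pi[of "\<tau> / of_nat N"] assms level_pos by simp
qed

text \<open>The trace argument applied to the Fricke transform, whose expansions at infinity and at 0
  are qexp_zero N f and qexp_inf f.\<close>
lemma coeff_qexp_zero:
  assumes "prime N"
  shows "(deriv ^^ m) (qexp_zero N f) 0 / fact m = - fcoeff f (N * m)"
proof -
  interpret gamma0_trace N fricke "qexp_zero N f" "qexp_inf f"
    using assms fricke_slash2_invariant holomorphic_qexp_zero qexp_zero_0 fricke_eq_qexp_zero
      holomorphic_qexp_inf qexp_inf_0 fricke_invert
    by unfold_locales auto
  show ?thesis using coeff_A_eq_neg_coeff_B[of m] by (simp add: fcoeff_def)
qed

end

section \<open>Lipschitz bounds for the Jacobi maps\<close>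

lemma sum_square_mult_power_closed_form:
  fixes x :: real
  shows "(1 - x) ^ 3 * (\<Sum>n<N. (real n)\<^sup>2 * x ^ n) =
    x * (1 + x) - x ^ N * ((real N)\<^sup>2 * (1 - x)\<^sup>2 + 2 * real N * x * (1 - x) + x * (1 + x))"
  by (induction N) (simp_all add: algebra_simps power2_eq_square power3_eq_cube)

lemma sum_square_mult_power_le:
  fixes x :: real
  assumes "0 \<le> x" "x < 1"
  shows "(\<Sum>n<N. (real n)\<^sup>2 * x ^ n) \<le> 2 * x / (1 - x) ^ 3"
proof -
  have "(1 - x) ^ 3 * (\<Sum>n<N. (real n)\<^sup>2 * x ^ n) \<le> x * (1 + x)"
    unfolding sum_square_mult_power_closed_form using assms by simp
  also have "\<dots> \<le> x * 2" using assms by (intro mult_left_mono) auto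
  finally have "(\<Sum>n<N. (real n)\<^sup>2 * x ^ n) * (1 - x) ^ 3 \<le> 2 * x" by (metis mult.commute)
  moreover have "(1 - x) ^ 3 > 0" using assms by simp
  ultimately show ?thesis by (simp add: pos_le_divide_eq)
qed

lemma norm_div_le_if_coeffs_le_square:
  fixes H :: "complex \<Rightarrow> complex"
  assumes H: "H holomorphic_on ball 0 1" and D: "D \<ge> 0"
    and coeff: "\<And>n. cmod ((deriv ^^ n) H 0 / fact n) \<le> D * (real n)\<^sup>2"
    and t: "cmod t < 1"
  shows "cmod (H t / t) \<le> 2 * D / (1 - cmod t) ^ 3"
proof (cases "t = 0")
  case False
  define x where "x = cmod t"
  have x: "x > 0" "x < 1" using False t unfolding x_def by auto
  have "(\<lambda>N. \<Sum>n<N. (deriv ^^ n) H 0 / fact n * t ^ n) \<longlonglongrightarrow> H t"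
    using holomorphic_power_series[OF H, of t] t by (simp add: sums_def)
  moreover have "cmod (\<Sum>n<N. (deriv ^^ n) H 0 / fact n * t ^ n) \<le> D * (2 * x / (1 - x) ^ 3)" for N
  proof -
    have "cmod ((deriv ^^ n) H 0 / fact n * t ^ n) \<le> D * ((real n)\<^sup>2 * x ^ n)" for n
    proof -
      have "cmod ((deriv ^^ n) H 0 / fact n * t ^ n) = cmod ((deriv ^^ n) H 0 / fact n) * x ^ n"
        unfolding x_def norm_mult norm_power ..
      also have "\<dots> \<le> D * (real n)\<^sup>2 * x ^ n" using coeff[of n] x by (intro mult_right_mono) auto
      finally show ?thesis by simp
    qed
    then have "cmod (\<Sum>n<N. (deriv ^^ n) H 0 / fact n * t ^ n) \<le> (\<Sum>n<N. D * ((real n)\<^sup>2 * x ^ n))"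
      by (intro order_trans[OF norm_sum] sum_mono)
    also have "\<dots> \<le> D * (2 * x / (1 - x) ^ 3)"
      unfolding sum_distrib_left[symmetric] using sum_square_mult_power_le[of x N] x D
      by (intro mult_left_mono) auto
    finally show ?thesis .
  qed
  ultimately have "cmod (H t) \<le> D * (2 * x / (1 - x) ^ 3)"
    by (intro LIMSEQ_le_const2[OF tendsto_norm]) auto
  then have "cmod (H t) / x \<le> D * (2 * x / (1 - x) ^ 3) / x"
    using x by (intro divide_right_mono) auto
  also have "\<dots> = 2 * D / (1 - x) ^ 3" using x by simp
  finally show ?thesis unfolding x_def by (simp add: norm_divide)
qed (use D in simp)

lemma norm_contour_integral_linepath_le:
  assumes "\<And>x. x \<in> closed_segment q q' \<Longrightarrow> cmod (g x) \<le> B" "B \<ge> 0"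
  shows "cmod (contour_integral (linepath q q') g) \<le> B * cmod (q' - q)"
proof (cases "g contour_integrable_on linepath q q'")
  case True
  then show ?thesis using assms by (intro contour_integral_bound_linepath)
next
  case False
  then show ?thesis using assms(2) by (simp add: not_integrable_contour_integral)
qed

lemma norm_contour_integral_div_le:
  assumes H: "H holomorphic_on ball 0 1" and D: "D \<ge> 0"
    and coeff: "\<And>n. cmod ((deriv ^^ n) H 0 / fact n) \<le> D * (real n)\<^sup>2"
    and r: "r < 1" and q: "q \<in> ball 0 r" "q' \<in> ball 0 r"
  shows "cmod (contour_integral (linepath q q') (\<lambda>t. H t / t)) \<le> 2 * D / (1 - r) ^ 3 * cmod (q' - q)"
proof (rule norm_contour_integral_linepath_le)
  fix t assume "t \<in> closed_segment q q'"
  then have "cmod t < r" using closed_segment_subset[OF q convex_ball] by auto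
  then have "cmod (H t / t) \<le> 2 * D / (1 - cmod t) ^ 3"
    using r by (intro norm_div_le_if_coeffs_le_square[OF H D coeff]) auto
  also have "\<dots> \<le> 2 * D / (1 - r) ^ 3"
    using \<open>cmod t < r\<close> r D by (intro divide_left_mono power_mono mult_pos_pos) auto
  finally show "cmod (H t / t) \<le> 2 * D / (1 - r) ^ 3" .
qed (use D r in simp)

context normalized_eigenform
begin

lemma mu_inf_diff_le:
  assumes "r < 1" "q \<in> ball 0 r" "q' \<in> ball 0 r"
  shows "cmod (mu_inf_diff f q q') \<le> 2 / (1 - r) ^ 3 * cmod (q' - q)"
  using norm_contour_integral_div_le[OF holomorphic_qexp_inf _ _ assms, of 1] norm_fcoeff_le_square
  unfolding mu_inf_diff_def fcoeff_def by simp

lemma mu_zero_diff_le: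
  assumes "r < 1" "q \<in> ball 0 r" "q' \<in> ball 0 r"
  shows "cmod (mu_zero_diff p f q q') \<le> 2 * real p / (1 - r) ^ 3 * cmod (q' - q)"
proof -
  obtain lam where lam: "cmod lam \<le> real p" "\<And>n. fcoeff f (p * n) = lam * fcoeff f n"
    using hecke_U_eigenvalue by blast
  have "cmod ((deriv ^^ m) (qexp_zero p f) 0 / fact m) \<le> real p * (real m)\<^sup>2" for m
    unfolding coeff_qexp_zero[OF prime_level] lam(2) norm_minus_cancel norm_mult
    using lam(1) norm_fcoeff_le_square[of m] by (intro mult_mono) auto
  then show ?thesis
    using norm_contour_integral_div_le[OF holomorphic_qexp_zero _ _ assms] unfolding mu_zero_diff_def by simp
qed

lemma mu_inf_diff_le_7:
  assumes "q \<in> ball 0 (1/100)" "q' \<in> ball 0 (1/100)"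
  shows "cmod (mu_inf_diff f q q') \<le> 7 * cmod (q' - q)"
proof -
  have "cmod (mu_inf_diff f q q') \<le> 2 / (1 - 1/100) ^ 3 * cmod (q' - q)"
    by (rule mu_inf_diff_le[OF _ assms]) simp
  also have "(1 - 1/100 :: real) ^ 3 = 970299/1000000" by (simp add: power3_eq_cube)
  also have "2 / (970299/1000000) * cmod (q' - q) \<le> 7 * cmod (q' - q)" by (intro mult_right_mono) auto
  finally show ?thesis .
qed

lemma mu_zero_diff_le_96:
  assumes "q \<in> ball 0 (1 - 1 / (2 * real p))" "q' \<in> ball 0 (1 - 1 / (2 * real p))"
  shows "cmod (mu_zero_diff p f q q') \<le> 96 * real p ^ 4 * cmod (q' - q)"
proof -
  have "cmod (mu_zero_diff p f q q') \<le> 2 * real p / (1 - (1 - 1 / (2 * real p))) ^ 3 * cmod (q' - q)"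
    using level_pos by (intro mu_zero_diff_le[OF _ assms]) simp
  also have "2 * real p / (1 - (1 - 1 / (2 * real p))) ^ 3 = 16 * real p ^ 4"
    using level_pos by (simp add: power_divide power_mult_distrib power_numeral_reduce)
  also have "16 * real p ^ 4 * cmod (q' - q) \<le> 96 * real p ^ 4 * cmod (q' - q)"
    by (intro mult_right_mono) auto
  finally show ?thesis .
qed

end

theorem mainTheorem5:
  fixes p :: nat
  assumes "prime p"
    and "\<exists>f. weight2_cusp_form p f \<and> (\<exists>\<tau>\<in>uhp. f \<tau> \<noteq> 0)"
  shows "(\<forall>f\<in>D1 p. \<forall>q\<in>ball 0 (1/100). \<forall>q'\<in>ball 0 (1/100).
            norm (mu_inf_diff f q q') \<le> 7 * norm (q' - q))
       \<and> (\<forall>f\<in>D1 p. \<forall>q\<in>ball 0 (1 - 1 / (2 * real p)). \<forall>q'\<in>ball 0 (1 - 1 / (2 * real p)).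
            norm (mu_zero_diff p f q q') \<le> 96 * real p ^ 4 * norm (q' - q))
       \<and> (\<forall>f\<in>D1 p. \<forall>q\<in>ball 0 (5/1000). \<forall>q'\<in>ball 0 (5/1000).
            norm (mu_inf_diff f q q') \<le> 7 * norm (q' - q))
       \<and> (\<forall>f\<in>D1 p. \<forall>q\<in>ball 0 (1 - 1 / real p). \<forall>q'\<in>ball 0 (1 - 1 / real p).
            norm (mu_zero_diff p f q q') \<le> 96 * real p ^ 4 * norm (q' - q))"
proof -
  have eigenform: "normalized_eigenform p f" if "f \<in> D1 p" for f
    using assms(1) that prime_gt_0_nat unfolding D1_def by unfold_locales auto
  have inf: "norm (mu_inf_diff f q q') \<le> 7 * norm (q' - q)"
    if "f \<in> D1 p" "q \<in> ball 0 (1/100)" "q' \<in> ball 0 (1/100)" for f q q'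
    using normalized_eigenform.mu_inf_diff_le_7[OF eigenform[OF that(1)] that(2,3)] .
  have zero: "norm (mu_zero_diff p f q q') \<le> 96 * real p ^ 4 * norm (q' - q)"
    if "f \<in> D1 p" "q \<in> ball 0 (1 - 1 / (2 * real p))" "q' \<in> ball 0 (1 - 1 / (2 * real p))" for f q q'
    using normalized_eigenform.mu_zero_diff_le_96[OF eigenform[OF that(1)] that(2,3)] .
  have sub_inf: "ball 0 (5/1000) \<subseteq> ball (0::complex) (1/100)" by (rule subset_ball) simp
  have "1 - 1 / real p \<le> 1 - 1 / (2 * real p)"
    using prime_gt_0_nat[OF assms(1)] by (intro diff_left_mono divide_left_mono) auto
  then have sub_zero: "ball 0 (1 - 1 / real p) \<subseteq> ball (0::complex) (1 - 1 / (2 * real p))"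
    by (rule subset_ball)
  show ?thesis
    using inf zero subsetD[OF sub_inf] subsetD[OF sub_zero] by (intro conjI ballI) simp_all
qed

end
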